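(* Let $A\in\mathbb{R}^{m\times n}$, $c\in\mathbb{R}^n$, $\lambda>0$, let $h:\mathbb{R}^m\to\mathbb{R}$ be convex and twice continuously differentiable, and let $p:\mathbb{R}^n\to(-\infty,+\infty]$ be closed, proper, convex and piecewise linear-quadratic. Let $f(x):=h(Ax)-\langle c,x\rangle+\lambda p(x)$, assume the solution set $\Omega$ of $\min_x f(x)$ is nonempty and compact, and let $\mathcal{T}_f:=\partial f$. If $h$ is strongly convex on every compact convex set in $\mathbb{R}^m$, then for every $\tau>0$, every $x^0\in\mathbb{R}^n$ and every summable nonnegative sequence $\{\epsilon_k\}_{k\ge0}$, with $\mathcal{M}:=I_n+\tau A^TA$, there exists $\kappa>0$ such that $$\mathrm{dist}(x,\Omega)\le\kappa\,\mathrm{dist}(0,\mathcal{T}_f(x))\quad\text{for all }x\in\mathbb{R}^n\text{ with }\mathrm{dist}(x,\Omega)\le\sum_{k=0}^\infty\epsilon_k+\mathrm{dist}_{\mathcal{M}}(x^0,\Omega).$$ Moreover, the strong convexity property of $h$ on every compact convex set holds in the two special cases (1) $h(y)=\sum_{i=1}^m(y_i-b_i)^2/2$ for a given $b\in\mathbb{R}^m$; (2) $h(y)=\sum_{i=1}^m\log(1+\exp(-b_iy_i))$ for a given $b\in\{-1,1\}^m$.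
   Context: A function $p$ is piecewise linear-quadratic if its effective domain is a union of finitely many polyhedral sets, on each of which $p$ is given by a quadratic (possibly linear) polynomial. $\mathrm{dist}_{\mathcal{M}}(x,\mathcal{C}):=\inf_{x'\in\mathcal{C}}\sqrt{\langle x-x',\mathcal{M}(x-x')\rangle}$; $\mathrm{dist}$ is the Euclidean distance, with $\mathrm{dist}(0,\emptyset)=+\infty$. *)

theory Defs
  imports "HOL-Analysis.Analysis" "HOL-Library.Extended_Real"
begin

text \<open>Extended-real-valued functions on R^n (values in (-inf,+inf] are required separately).\<close>

definition edom :: "('a \<Rightarrow> ereal) \<Rightarrow> 'a set" where
  "edom p = {x. p x < \<infinity>}"

definition epigraph_e :: "('a \<Rightarrow> ereal) \<Rightarrow> ('a \<times> real) set" where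
  "epigraph_e p = {(x, r). p x \<le> ereal r}"

definition proper_fun :: "('a \<Rightarrow> ereal) \<Rightarrow> bool" where
  "proper_fun p \<longleftrightarrow> (\<forall>x. p x \<noteq> -\<infinity>) \<and> (\<exists>x. p x < \<infinity>)"

definition closed_fun :: "('a::topological_space \<Rightarrow> ereal) \<Rightarrow> bool" where
  "closed_fun p \<longleftrightarrow> closed (epigraph_e p)"

definition convex_fun :: "('a::real_vector \<Rightarrow> ereal) \<Rightarrow> bool" where
  "convex_fun p \<longleftrightarrow> convex (epigraph_e p)"

definition piecewise_lq :: "(real^'n \<Rightarrow> ereal) \<Rightarrow> bool" where
  "piecewise_lq p \<longleftrightarrow>
     (\<exists>S. finite S \<and> edom p = \<Union>S \<and>
        (\<forall>P\<in>S. polyhedron P \<and>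
           (\<exists>(Q::real^'n^'n) (a::real^'n) (\<alpha>::real).
               \<forall>x\<in>P. p x = ereal (x \<bullet> (Q *v x) + a \<bullet> x + \<alpha>))))"

definition twice_cont_diff :: "(real^'m \<Rightarrow> real) \<Rightarrow> bool" where
  "twice_cont_diff h \<longleftrightarrow>
     (\<exists>(g::real^'m \<Rightarrow> real^'m) (H::real^'m \<Rightarrow> real^'m^'m).
        (\<forall>y. (h has_derivative (\<lambda>v. g y \<bullet> v)) (at y)) \<and>
        (\<forall>y. (g has_derivative (\<lambda>v. H y *v v)) (at y)) \<and>
        continuous_on UNIV H)"

definition strongly_convex_on :: "'a::real_normed_vector set \<Rightarrow> ('a \<Rightarrow> real) \<Rightarrow> bool" where
  "strongly_convex_on K h \<longleftrightarrow>
     (\<exists>\<mu>>0. \<forall>x\<in>K. \<forall>y\<in>K. \<forall>t::real. 0 \<le> t \<and> t \<le> 1 \<longrightarrow>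
        h ((1 - t) *\<^sub>R x + t *\<^sub>R y)
          \<le> (1 - t) * h x + t * h y - \<mu> / 2 * t * (1 - t) * (norm (x - y))\<^sup>2)"

definition strongly_convex_on_compacts :: "('a::real_normed_vector \<Rightarrow> real) \<Rightarrow> bool" where
  "strongly_convex_on_compacts h \<longleftrightarrow>
     (\<forall>K. compact K \<and> convex K \<longrightarrow> strongly_convex_on K h)"

definition subdiff :: "('a::real_inner \<Rightarrow> ereal) \<Rightarrow> 'a \<Rightarrow> 'a set" where
  "subdiff f x = {v. f x < \<infinity> \<and> (\<forall>z. f x + ereal (v \<bullet> (z - x)) \<le> f z)}"

text \<open>distance from a point to a set, with dist(x, {}) = +inf\<close>
definition edist_set :: "'a::metric_space \<Rightarrow> 'a set \<Rightarrow> ereal" where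
  "edist_set x S = (if S = {} then \<infinity> else ereal (infdist x S))"

definition dist_M :: "real^'n^'n \<Rightarrow> real^'n \<Rightarrow> (real^'n) set \<Rightarrow> real" where
  "dist_M M x C = (INF x'\<in>C. sqrt ((x - x') \<bullet> (M *v (x - x'))))"

end

theory Submission
  imports Defs
begin

(* On every polyhedral piece P of dom p the objective F is h(Ax) plus a quadratic. Linearising h
   at A x* for a minimiser x* and using strong convexity of h on a ball containing the images of
   the bounded region B = {x. dist(x, Omega) <= R}, one gets F x - F x* >= beta G x on P \<inter> B,
   where G x = Flin x - Flin x* + |Ax - Ax*|^2, with Flin the objective with h linearised at A x*,
   is a convex quadratic, nonnegative on P, whose zero set in P is P \<inter> Omega. A Hoffman-type error bound for zero sets of convex quadratics on
   polyhedra gives dist(x, Omega) <= C (sqrt (G x) + G x), hence quadratic growth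
   F x - F x* >= alpha dist(x, Omega)^2 on B; pieces missing Omega are handled by compactness.
   The subgradient inequality at the nearest minimiser turns quadratic growth into the error
   bound. Both examples are sums of one-dimensional functions whose second derivatives are
   bounded below on bounded intervals. *)

section \<open>Hoffman's error bound\<close>

lemma cone_norm_le_pos_homogeneous:
  fixes r :: "'a::euclidean_space \<Rightarrow> real"
  assumes "closed W" and cone: "\<And>w c. w \<in> W \<Longrightarrow> 0 < c \<Longrightarrow> c *\<^sub>R w \<in> W"
    and "continuous_on W r" and homogeneous: "\<And>w c. 0 < c \<Longrightarrow> r (c *\<^sub>R w) = c * r w"
    and pos: "\<And>w. w \<in> W \<Longrightarrow> w \<noteq> 0 \<Longrightarrow> 0 < r w"
  shows "\<exists>C\<ge>0. \<forall>w\<in>W. norm w \<le> C * r w"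
proof -
  define T where "T = W \<inter> sphere 0 1"
  have "compact T" unfolding T_def using \<open>closed W\<close> by (intro closed_Int_compact compact_sphere)
  have r0: "r 0 = 0" using homogeneous[of 2 0] by simp
  have normalized: "w /\<^sub>R norm w \<in> T" "r (w /\<^sub>R norm w) = r w / norm w" if "w \<in> W" "w \<noteq> 0" for w
    using that cone[of w "inverse (norm w)"] homogeneous[of "inverse (norm w)" w]
    by (auto simp: T_def divide_inverse_commute)
  show ?thesis
  proof (cases "T = {}")
    case True
    then show ?thesis using normalized r0 by (intro exI[of _ 0]) auto
  next
    case False
    obtain w0 where "w0 \<in> T" and w0_min: "\<And>w. w \<in> T \<Longrightarrow> r w0 \<le> r w"
      using continuous_attains_inf[OF \<open>compact T\<close> False continuous_on_subset[OF \<open>continuous_on W r\<close>]]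
      by (auto simp: T_def)
    have "w0 \<in> W" "w0 \<noteq> 0" using \<open>w0 \<in> T\<close> by (auto simp: T_def)
    then have "r w0 > 0" by (rule pos)
    have "norm w \<le> 1 / r w0 * r w" if "w \<in> W" for w
    proof (cases "w = 0")
      case False
      then have "r w0 \<le> r w / norm w" using w0_min normalized \<open>w \<in> W\<close> by metis
      then show ?thesis using \<open>r w0 > 0\<close> False by (simp add: field_simps)
    qed (simp add: r0)
    then show ?thesis using \<open>r w0 > 0\<close> by (intro exI[of _ "1 / r w0"]) auto
  qed
qed

lemma polar_cone_norm_le_sum_pos:
  fixes N :: "'a::euclidean_space set"
  assumes "finite N"
  shows "\<exists>C\<ge>0. \<forall>w. (\<forall>d. (\<forall>a\<in>N. a \<bullet> d \<le> 0) \<longrightarrow> w \<bullet> d \<le> 0) \<longrightarrow>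
            norm w \<le> C * (\<Sum>a\<in>N. max 0 (a \<bullet> w))"
proof -
  define W where "W = {w::'a. \<forall>d. (\<forall>a\<in>N. a \<bullet> d \<le> 0) \<longrightarrow> w \<bullet> d \<le> 0}"
  have "W = (\<Inter>d\<in>{d. \<forall>a\<in>N. a \<bullet> d \<le> 0}. {w. d \<bullet> w \<le> 0})"
    by (auto simp: W_def inner_commute)
  then have "closed W" by (auto intro!: closed_halfspace_le)
  moreover have "c *\<^sub>R w \<in> W" if "w \<in> W" "0 < c" for w c
    using that by (auto simp: W_def mult_nonneg_nonpos)
  moreover have "continuous_on W (\<lambda>w. \<Sum>a\<in>N. max 0 (a \<bullet> w))" by (intro continuous_intros)
  moreover have "(\<Sum>a\<in>N. max 0 (a \<bullet> (c *\<^sub>R w))) = c * (\<Sum>a\<in>N. max 0 (a \<bullet> w))" if "0 < c" for c w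
    using that by (simp add: sum_distrib_left max_mult_distrib_left)
  moreover have "0 < (\<Sum>a\<in>N. max 0 (a \<bullet> w))" if "w \<in> W" "w \<noteq> 0" for w
  proof (rule ccontr)
    assume "\<not> 0 < (\<Sum>a\<in>N. max 0 (a \<bullet> w))"
    moreover have "0 \<le> (\<Sum>a\<in>N. max 0 (a \<bullet> w))" by (intro sum_nonneg) simp
    ultimately have "(\<Sum>a\<in>N. max 0 (a \<bullet> w)) = 0" by linarith
    then have "\<forall>a\<in>N. max 0 (a \<bullet> w) = 0" using assms by (simp add: sum_nonneg_eq_0_iff)
    then have "\<forall>a\<in>N. a \<bullet> w \<le> 0" by (metis max.absorb_iff1)
    then have "w \<bullet> w \<le> 0" using \<open>w \<in> W\<close> by (simp add: W_def)
    then show False using \<open>w \<noteq> 0\<close> by (metis inner_gt_zero_iff not_le)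
  qed
  ultimately have "\<exists>C\<ge>0. \<forall>w\<in>W. norm w \<le> C * (\<Sum>a\<in>N. max 0 (a \<bullet> w))"
    by (rule cone_norm_le_pos_homogeneous)
  then show ?thesis by (simp add: W_def)
qed

lemma closed_convex_halfspace_constraints:
  fixes Cs :: "('a::euclidean_space \<times> real) set"
  shows "closed {x. \<forall>q\<in>Cs. fst q \<bullet> x \<le> snd q}" and "convex {x. \<forall>q\<in>Cs. fst q \<bullet> x \<le> snd q}"
proof -
  have eq: "{x. \<forall>q\<in>Cs. fst q \<bullet> x \<le> snd q} = (\<Inter>q\<in>Cs. {x. fst q \<bullet> x \<le> snd q})" by auto
  show "closed {x. \<forall>q\<in>Cs. fst q \<bullet> x \<le> snd q}" unfolding eq by (auto intro!: closed_halfspace_le)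
  show "convex {x. \<forall>q\<in>Cs. fst q \<bullet> x \<le> snd q}" unfolding eq by (auto intro!: convex_INT convex_halfspace_le)
qed

lemma closest_point_polyhedron_normal:
  fixes Cs :: "('a::euclidean_space \<times> real) set"
  assumes "finite Cs" and S: "S = {x. \<forall>q\<in>Cs. fst q \<bullet> x \<le> snd q}" and "S \<noteq> {}"
    and active: "\<And>q. q \<in> Cs \<Longrightarrow> fst q \<bullet> closest_point S x = snd q \<Longrightarrow> fst q \<bullet> d \<le> 0"
  shows "(x - closest_point S x) \<bullet> d \<le> 0"
proof -
  define y where "y = closest_point S x"
  have "closed S" "convex S" unfolding S by (rule closed_convex_halfspace_constraints)+
  then have "y \<in> S" unfolding y_def using closest_point_exists \<open>S \<noteq> {}\<close> by blast
  have "\<forall>\<^sub>F t in at_right 0. fst q \<bullet> (y + t *\<^sub>R d) \<le> snd q" if "q \<in> Cs" for q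
  proof (cases "fst q \<bullet> y = snd q")
    case True
    then have "fst q \<bullet> (y + t *\<^sub>R d) \<le> snd q" if "t > 0" for t
      using active[OF \<open>q \<in> Cs\<close>] that by (auto simp: y_def inner_add_right mult_nonneg_nonpos)
    then show ?thesis by (auto simp: eventually_at_right_field intro: exI[of _ 1])
  next
    case False
    then have "fst q \<bullet> (y + 0 *\<^sub>R d) < snd q" using \<open>y \<in> S\<close> S that by force
    moreover have "((\<lambda>t. fst q \<bullet> (y + t *\<^sub>R d)) \<longlongrightarrow> fst q \<bullet> (y + 0 *\<^sub>R d)) (at_right 0)"
      by (intro tendsto_intros)
    ultimately have "\<forall>\<^sub>F t in at_right 0. fst q \<bullet> (y + t *\<^sub>R d) < snd q"
      by (rule order_tendstoD(2)[rotated])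
    then show ?thesis by (rule eventually_mono) simp
  qed
  then have "\<forall>\<^sub>F t in at_right 0. \<forall>q\<in>Cs. fst q \<bullet> (y + t *\<^sub>R d) \<le> snd q"
    using \<open>finite Cs\<close> by (simp add: eventually_ball_finite_distrib)
  then obtain b where "b > 0" "\<And>t. 0 < t \<Longrightarrow> t < b \<Longrightarrow> \<forall>q\<in>Cs. fst q \<bullet> (y + t *\<^sub>R d) \<le> snd q"
    by (auto simp: eventually_at_right_field)
  then obtain t where "t > 0" "\<forall>q\<in>Cs. fst q \<bullet> (y + t *\<^sub>R d) \<le> snd q"
    using field_lbound_gt_zero[of b b] by auto
  then have "y + t *\<^sub>R d \<in> S" using S by simp
  from closest_point_dot[OF \<open>convex S\<close> \<open>closed S\<close> this, of x]
  have "t * ((x - y) \<bullet> d) \<le> 0" by (simp add: y_def)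
  then show ?thesis using \<open>t > 0\<close> by (simp add: y_def mult_le_0_iff)
qed

theorem hoffman_error_bound:
  fixes Cs :: "('a::euclidean_space \<times> real) set"
  assumes "finite Cs" and S: "S = {x. \<forall>q\<in>Cs. fst q \<bullet> x \<le> snd q}" and "S \<noteq> {}"
  shows "\<exists>C\<ge>0. \<forall>x. infdist x S \<le> C * (\<Sum>q\<in>Cs. max 0 (fst q \<bullet> x - snd q))"
proof -
  have "\<forall>N\<in>Pow (fst ` Cs). \<exists>C\<ge>0. \<forall>w. (\<forall>d. (\<forall>a\<in>N. a \<bullet> d \<le> 0) \<longrightarrow> w \<bullet> d \<le> 0) \<longrightarrow>
            norm w \<le> C * (\<Sum>a\<in>N. max 0 (a \<bullet> w))"
    using \<open>finite Cs\<close> by (auto intro!: polar_cone_norm_le_sum_pos intro: finite_subset)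
  then obtain CN where CN: "\<And>N. N \<in> Pow (fst ` Cs) \<Longrightarrow> CN N \<ge> 0"
    "\<And>N w. N \<in> Pow (fst ` Cs) \<Longrightarrow> (\<forall>d. (\<forall>a\<in>N. a \<bullet> d \<le> 0) \<longrightarrow> w \<bullet> d \<le> 0) \<Longrightarrow>
            norm w \<le> CN N * (\<Sum>a\<in>N. max 0 (a \<bullet> w))"
    by metis
  define C where "C = (\<Sum>N\<in>Pow (fst ` Cs). CN N)"
  show ?thesis
  proof (intro exI[of _ C] conjI allI)
    show "C \<ge> 0" unfolding C_def using CN(1) by (intro sum_nonneg) auto
    fix x
    define y where "y = closest_point S x"
    define I where "I = {q\<in>Cs. fst q \<bullet> y = snd q}"
    have "fst ` I \<in> Pow (fst ` Cs)" by (auto simp: I_def)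
    have "y \<in> S" unfolding y_def
      using closest_point_exists(1) closed_convex_halfspace_constraints(1) S \<open>S \<noteq> {}\<close> by blast
    have "\<forall>d. (\<forall>a\<in>fst ` I. a \<bullet> d \<le> 0) \<longrightarrow> (x - y) \<bullet> d \<le> 0"
      using closest_point_polyhedron_normal[OF assms] by (auto simp: I_def y_def)
    then have "norm (x - y) \<le> CN (fst ` I) * (\<Sum>a\<in>fst ` I. max 0 (a \<bullet> (x - y)))"
      by (rule CN(2)[OF \<open>fst ` I \<in> Pow (fst ` Cs)\<close>])
    also have "\<dots> \<le> CN (fst ` I) * (\<Sum>q\<in>I. max 0 (fst q \<bullet> (x - y)))"
      using \<open>finite Cs\<close> CN(1)[OF \<open>fst ` I \<in> Pow (fst ` Cs)\<close>]
      by (intro mult_left_mono) (auto simp: I_def intro!: sum_image_le[unfolded o_def])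
    also have "\<dots> \<le> CN (fst ` I) * (\<Sum>q\<in>Cs. max 0 (fst q \<bullet> x - snd q))"
    proof (intro mult_left_mono)
      have "(\<Sum>q\<in>I. max 0 (fst q \<bullet> (x - y))) = (\<Sum>q\<in>I. max 0 (fst q \<bullet> x - snd q))"
        by (auto simp: I_def inner_diff_right intro!: sum.cong)
      also have "\<dots> \<le> (\<Sum>q\<in>Cs. max 0 (fst q \<bullet> x - snd q))"
        using \<open>finite Cs\<close> by (intro sum_mono2) (auto simp: I_def)
      finally show "(\<Sum>q\<in>I. max 0 (fst q \<bullet> (x - y))) \<le> (\<Sum>q\<in>Cs. max 0 (fst q \<bullet> x - snd q))" .
    qed (use CN(1)[OF \<open>fst ` I \<in> Pow (fst ` Cs)\<close>] in simp)
    also have "\<dots> \<le> C * (\<Sum>q\<in>Cs. max 0 (fst q \<bullet> x - snd q))"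
      unfolding C_def using CN(1) \<open>finite Cs\<close> \<open>fst ` I \<in> Pow (fst ` Cs)\<close>
      by (intro mult_right_mono member_le_sum sum_nonneg) auto
    finally show "infdist x S \<le> C * (\<Sum>q\<in>Cs. max 0 (fst q \<bullet> x - snd q))"
      using infdist_le[OF \<open>y \<in> S\<close>, of x] by (simp add: dist_norm)
  qed
qed

lemma polyhedron_as_constraints:
  fixes P :: "'a::euclidean_space set"
  assumes "polyhedron P"
  obtains Cs where "finite Cs" "P = {x. \<forall>q\<in>Cs. fst q \<bullet> x \<le> snd q}"
proof -
  obtain F where F: "finite F" "P = \<Inter>F" "\<forall>h\<in>F. \<exists>q. h = {x. fst q \<bullet> x \<le> snd q}"
    using assms unfolding polyhedron_def by fastforce
  then obtain q where "\<forall>h\<in>F. h = {x. fst (q h) \<bullet> x \<le> snd (q h)}" by metis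
  then have "P = {x. \<forall>c\<in>q ` F. fst c \<bullet> x \<le> snd c}" using F(2) by auto
  then show thesis using that F(1) by blast
qed

section \<open>Convex quadratic functions on polyhedra\<close>

lemma inner_vector_matrix: "x \<bullet> (y v* M) = y \<bullet> (M *v x)" for M :: "real^'n^'m"
  by (metis dot_lmul_matrix inner_commute)

definition quadratic_fun :: "(real^'n \<Rightarrow> real) \<Rightarrow> bool" where
  "quadratic_fun G \<longleftrightarrow> (\<exists>(Q::real^'n^'n) a \<alpha>. \<forall>x. G x = x \<bullet> (Q *v x) + a \<bullet> x + \<alpha>)"

lemma quadratic_fun_affine: "quadratic_fun (\<lambda>x. a \<bullet> x + \<alpha>)"
  unfolding quadratic_fun_def by (rule exI[of _ 0]) auto

lemma quadratic_fun_quadratic_form: "quadratic_fun (\<lambda>x. x \<bullet> (Q *v x))"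
  unfolding quadratic_fun_def by (rule exI[of _ Q], rule exI[of _ 0]) auto

lemma quadratic_fun_add:
  assumes "quadratic_fun F" "quadratic_fun G"
  shows "quadratic_fun (\<lambda>x. F x + G x)"
proof -
  obtain Q a \<alpha> Q' a' \<alpha>' where "\<And>x. F x = x \<bullet> (Q *v x) + a \<bullet> x + \<alpha>" "\<And>x. G x = x \<bullet> (Q' *v x) + a' \<bullet> x + \<alpha>'"
    using assms unfolding quadratic_fun_def by metis
  then show ?thesis unfolding quadratic_fun_def
    by (intro exI[of _ "Q + Q'"] exI[of _ "a + a'"] exI[of _ "\<alpha> + \<alpha>'"])
      (simp add: matrix_vector_mult_add_rdistrib inner_add_left inner_add_right)
qed

lemma quadratic_fun_cmult:
  assumes "quadratic_fun G"
  shows "quadratic_fun (\<lambda>x. k * G x)"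
proof -
  obtain Q a \<alpha> where "\<And>x. G x = x \<bullet> (Q *v x) + a \<bullet> x + \<alpha>"
    using assms unfolding quadratic_fun_def by metis
  then show ?thesis unfolding quadratic_fun_def
    by (intro exI[of _ "k *\<^sub>R Q"] exI[of _ "k *\<^sub>R a"] exI[of _ "k * \<alpha>"])
      (simp add: scaleR_matrix_vector_assoc[symmetric] algebra_simps)
qed

lemma quadratic_fun_norm_affine_sq:
  fixes A :: "real^'n^'m"
  shows "quadratic_fun (\<lambda>x. (norm (A *v x - y))\<^sup>2)"
proof -
  have "(norm (A *v x - y))\<^sup>2 = x \<bullet> ((transpose A ** A) *v x) + (- 2 *\<^sub>R (transpose A *v y)) \<bullet> x + y \<bullet> y"
    for x
    by (simp add: power2_norm_eq_inner inner_diff_left inner_diff_right inner_commute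
        inner_vector_matrix matrix_vector_mul_assoc[symmetric])
  then show ?thesis unfolding quadratic_fun_def by blast
qed

lemma quadratic_form_add:
  fixes Q :: "real^'n^'n"
  shows "(y + w) \<bullet> (Q *v (y + w)) = y \<bullet> (Q *v y) + (Q *v y + transpose Q *v y) \<bullet> w + w \<bullet> (Q *v w)"
  by (simp add: matrix_vector_right_distrib inner_add_left inner_add_right dot_lmul_matrix)
    (simp add: inner_commute)

lemma quadratic_form_scaleR:
  fixes Q :: "real^'n^'n"
  shows "(k *\<^sub>R v) \<bullet> (Q *v (k *\<^sub>R v)) = k\<^sup>2 * (v \<bullet> (Q *v v))"
  by (simp add: matrix_vector_mult_scaleR power2_eq_square)

lemma symmetrized_inner_commute:
  fixes Q :: "real^'n^'n"
  shows "(Q *v u + transpose Q *v u) \<bullet> w = (Q *v w + transpose Q *v w) \<bullet> u"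
  by (simp add: inner_add_left dot_lmul_matrix inner_commute[of "Q *v u" w] inner_commute[of "Q *v w" u])

lemma symmetrized_inner_self:
  fixes Q :: "real^'n^'n"
  shows "(Q *v u + transpose Q *v u) \<bullet> u = 2 * (u \<bullet> (Q *v u))"
  by (simp add: inner_add_left dot_lmul_matrix inner_commute[of "Q *v u" u])

lemma quadratic_along_line:
  fixes Q :: "real^'n^'n"
  assumes G: "\<And>x. G x = x \<bullet> (Q *v x) + a \<bullet> x + \<alpha>"
  shows "G (y + t *\<^sub>R w) = G y + t * ((Q *v y + transpose Q *v y + a) \<bullet> w) + t\<^sup>2 * (w \<bullet> (Q *v w))"
  unfolding G quadratic_form_add quadratic_form_scaleR
  by (simp add: algebra_simps)

lemma quadratic_form_nonneg_if_convex_on: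
  fixes Q :: "real^'n^'n"
  assumes G: "\<And>x. G x = x \<bullet> (Q *v x) + a \<bullet> x + \<alpha>" and "convex_on P G" "x \<in> P" "y \<in> P"
  shows "0 \<le> (x - y) \<bullet> (Q *v (x - y))"
proof -
  define L where "L = (Q *v y + transpose Q *v y + a) \<bullet> (x - y)"
  define S where "S = (x - y) \<bullet> (Q *v (x - y))"
  have "G ((1 - 1/2) *\<^sub>R y + (1/2) *\<^sub>R x) \<le> (1 - 1/2) * G y + (1/2) * G x"
    by (rule convex_onD[OF assms(2)]) (use assms(3,4) in auto)
  moreover have "(1 - 1/2) *\<^sub>R y + (1/2) *\<^sub>R x = y + (1/2) *\<^sub>R (x - y)"
    by (simp add: algebra_simps flip: scaleR_left_distrib)
  moreover have "G (y + (1/2) *\<^sub>R (x - y)) = G y + L / 2 + S / 4"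
    using quadratic_along_line[OF G, of y "1/2" "x - y"] by (simp add: L_def S_def power2_eq_square)
  moreover have "G x = G y + L + S"
    using quadratic_along_line[OF G, of y 1 "x - y"] by (simp add: L_def S_def)
  ultimately have "G y + L / 2 + S / 4 \<le> (1/2) * G y + (1/2) * (G y + L + S)" by simp
  then show ?thesis unfolding S_def[symmetric] by (simp add: field_simps)
qed

lemma quadratic_form_nonneg_on_lines:
  fixes Q :: "real^'n^'n"
  assumes "convex P" and S: "\<And>x y. x \<in> P \<Longrightarrow> y \<in> P \<Longrightarrow> 0 \<le> (x - y) \<bullet> (Q *v (x - y))"
    and "p \<in> P" "x \<in> P" "z \<in> P"
  shows "0 \<le> (p - z + t *\<^sub>R (x - z)) \<bullet> (Q *v (p - z + t *\<^sub>R (x - z)))"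
proof -
  define comb where "comb s u v = (1 / (1 + s)) *\<^sub>R u + (s / (1 + s)) *\<^sub>R v" for s and u v :: "real^'n"
  have comb_in: "comb s u v \<in> P" if "u \<in> P" "v \<in> P" "s \<ge> 0" for u v s
    unfolding comb_def using that by (intro convexD[OF \<open>convex P\<close>]) (auto simp: field_simps)
  have comb_scale: "(1 + s) *\<^sub>R comb s u v = u + s *\<^sub>R v" if "s \<ge> 0" for u v s
    unfolding comb_def using that by (simp add: scaleR_add_right)
  obtain u v s where "u \<in> P" "v \<in> P" "s \<ge> 0" and eq: "p - z + t *\<^sub>R (x - z) = (1 + s) *\<^sub>R (u - v)"
  proof (cases "t \<ge> 0")
    case True
    have "p - z + t *\<^sub>R (x - z) = (1 + t) *\<^sub>R (comb t p x - z)"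
      unfolding scaleR_diff_right comb_scale[OF True] by (simp add: algebra_simps)
    then show thesis by (rule that[OF comb_in[OF \<open>p \<in> P\<close> \<open>x \<in> P\<close> True] \<open>z \<in> P\<close> True])
  next
    case False
    then have "- t \<ge> 0" by simp
    have "p - z + t *\<^sub>R (x - z) = (1 + - t) *\<^sub>R (comb (- t) p z - comb (- t) z x)"
      unfolding scaleR_diff_right comb_scale[OF \<open>- t \<ge> 0\<close>] by (simp add: algebra_simps)
    then show thesis
      by (rule that[OF comb_in[OF \<open>p \<in> P\<close> \<open>z \<in> P\<close> \<open>- t \<ge> 0\<close>] comb_in[OF \<open>z \<in> P\<close> \<open>x \<in> P\<close> \<open>- t \<ge> 0\<close>] \<open>- t \<ge> 0\<close>])
  qed
  show ?thesis
    unfolding eq quadratic_form_scaleR using S[OF \<open>u \<in> P\<close> \<open>v \<in> P\<close>] by simp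
qed

lemma discriminant_le_if_nonneg:
  fixes a b c :: real
  assumes "\<And>t. 0 \<le> a + b * t + c * t\<^sup>2" "0 \<le> c"
  shows "b\<^sup>2 \<le> 4 * a * c"
proof (cases "c = 0")
  case True
  have "b = 0"
  proof (rule ccontr)
    assume "b \<noteq> 0"
    then show False using assms(1)[of "- (a + 1) / b"] True by (simp add: field_simps)
  qed
  then show ?thesis using True by simp
next
  case False
  then have "0 \<le> a - b\<^sup>2 / (4 * c)"
    using assms(1)[of "- b / (2 * c)"] assms(2) by (simp add: field_simps power2_eq_square)
  then show ?thesis using False assms(2) by (simp add: field_simps)
qed

lemma semidefinite_cauchy_schwarz:
  fixes Q :: "real^'n^'n"
  assumes "\<And>t. 0 \<le> (u + t *\<^sub>R w) \<bullet> (Q *v (u + t *\<^sub>R w))" and "0 \<le> w \<bullet> (Q *v w)"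
  shows "\<bar>(Q *v u + transpose Q *v u) \<bullet> w\<bar> \<le> 2 * sqrt (u \<bullet> (Q *v u)) * sqrt (w \<bullet> (Q *v w))"
proof -
  have "(u + t *\<^sub>R w) \<bullet> (Q *v (u + t *\<^sub>R w))
      = u \<bullet> (Q *v u) + ((Q *v u + transpose Q *v u) \<bullet> w) * t + (w \<bullet> (Q *v w)) * t\<^sup>2" for t
    by (simp only: quadratic_form_add quadratic_form_scaleR inner_scaleR_right) (simp add: algebra_simps)
  then have "((Q *v u + transpose Q *v u) \<bullet> w)\<^sup>2 \<le> 4 * (u \<bullet> (Q *v u)) * (w \<bullet> (Q *v w))"
    using assms by (intro discriminant_le_if_nonneg) auto
  then have "sqrt (((Q *v u + transpose Q *v u) \<bullet> w)\<^sup>2) \<le> sqrt (4 * (u \<bullet> (Q *v u)) * (w \<bullet> (Q *v w)))"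
    by (rule real_sqrt_le_mono)
  then show ?thesis by (simp add: real_sqrt_mult)
qed

lemma quadratic_min_first_order:
  fixes Q :: "real^'n^'n"
  assumes G: "\<And>x. G x = x \<bullet> (Q *v x) + a \<bullet> x + \<alpha>" and "convex P" "z \<in> P" "x \<in> P"
    and min: "\<And>y. y \<in> P \<Longrightarrow> G z \<le> G y"
  shows "0 \<le> (Q *v z + transpose Q *v z + a) \<bullet> (x - z)"
proof -
  define L where "L = (Q *v z + transpose Q *v z + a) \<bullet> (x - z)"
  define S where "S = (x - z) \<bullet> (Q *v (x - z))"
  have "0 \<le> L + t * S" if "0 < t" "t < 1" for t
  proof -
    have "z + t *\<^sub>R (x - z) = (1 - t) *\<^sub>R z + t *\<^sub>R x" by (simp add: algebra_simps)
    then have "z + t *\<^sub>R (x - z) \<in> P" using that assms by (auto intro: convexD_alt)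
    then have "0 \<le> t * (L + t * S)"
      using min quadratic_along_line[OF G, of z t "x - z"]
      by (fastforce simp: L_def S_def power2_eq_square algebra_simps)
    then show ?thesis using that by (simp add: zero_le_mult_iff)
  qed
  then have "\<forall>\<^sub>F t in at_right 0. 0 \<le> L + t * S"
    by (auto simp: eventually_at_right_field intro: exI[of _ 1])
  moreover have "((\<lambda>t. L + t * S) \<longlongrightarrow> L + 0 * S) (at_right 0)"
    by (intro tendsto_intros)
  ultimately show ?thesis
    by (simp add: L_def tendsto_lowerbound[of _ _ "at_right 0"])
qed

lemma quadratic_form_zero_if_orthogonal_span:
  fixes Q :: "real^'n^'n"
  assumes "finite B" "w \<in> span B" and orth: "\<And>u. u \<in> B \<Longrightarrow> (Q *v u + transpose Q *v u) \<bullet> w = 0"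
  shows "w \<bullet> (Q *v w) = 0"
proof -
  obtain c where c: "w = (\<Sum>v\<in>B. c v *\<^sub>R v)" using span_finite[OF assms(1)] assms(2) by auto
  have "2 * (w \<bullet> (Q *v w)) = (Q *v w + transpose Q *v w) \<bullet> w"
    by (rule symmetrized_inner_self[symmetric])
  also have "\<dots> = (\<Sum>v\<in>B. c v * ((Q *v w + transpose Q *v w) \<bullet> v))"
    by (subst (2) c) (simp add: inner_sum_right)
  also have "\<dots> = 0"
  proof (intro sum.neutral ballI)
    fix v assume "v \<in> B"
    then show "c v * ((Q *v w + transpose Q *v w) \<bullet> v) = 0"
      using orth symmetrized_inner_commute[of Q w v] by simp
  qed
  finally show ?thesis by simp
qed

lemma convex_quadratic_vanishing_split:
  fixes Q :: "real^'n^'n"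
  assumes G: "\<And>x. G x = x \<bullet> (Q *v x) + a \<bullet> x + \<alpha>" and "convex_on P G"
    and "\<And>x. x \<in> P \<Longrightarrow> 0 \<le> G x" and "z \<in> P" "G z = 0" "x \<in> P"
  shows "G x = (Q *v z + transpose Q *v z + a) \<bullet> (x - z) + (x - z) \<bullet> (Q *v (x - z))"
    and "0 \<le> (Q *v z + transpose Q *v z + a) \<bullet> (x - z)"
    and "0 \<le> (x - z) \<bullet> (Q *v (x - z))"
proof -
  show "G x = (Q *v z + transpose Q *v z + a) \<bullet> (x - z) + (x - z) \<bullet> (Q *v (x - z))"
    using quadratic_along_line[OF G, of z 1 "x - z"] \<open>G z = 0\<close> by simp
  show "0 \<le> (Q *v z + transpose Q *v z + a) \<bullet> (x - z)"
    using assms(3,5) convex_on_imp_convex[OF \<open>convex_on P G\<close>]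
    by (intro quadratic_min_first_order[OF G _ \<open>z \<in> P\<close> \<open>x \<in> P\<close>]) auto
  show "0 \<le> (x - z) \<bullet> (Q *v (x - z))"
    by (rule quadratic_form_nonneg_if_convex_on[OF G \<open>convex_on P G\<close> \<open>x \<in> P\<close> \<open>z \<in> P\<close>])
qed

lemma zero_set_error_bound_from_equations:
  fixes G :: "'a::euclidean_space \<Rightarrow> real"
  assumes "polyhedron P" "finite E" "z \<in> P" "0 \<le> K"
    and G_nonneg: "\<And>x. x \<in> P \<Longrightarrow> 0 \<le> G x"
    and zeros: "\<And>x. x \<in> P \<Longrightarrow> \<forall>v\<in>E. v \<bullet> (x - z) = 0 \<Longrightarrow> G x = 0"
    and bound: "\<And>v x. v \<in> E \<Longrightarrow> x \<in> P \<Longrightarrow> \<bar>v \<bullet> (x - z)\<bar> \<le> G x + K * sqrt (G x)"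
  shows "\<exists>C\<ge>0. \<forall>x\<in>P. infdist x {x\<in>P. G x = 0} \<le> C * (sqrt (G x) + G x)"
proof -
  obtain CP where "finite CP" and P_eq: "P = {x. \<forall>q\<in>CP. fst q \<bullet> x \<le> snd q}"
    using polyhedron_as_constraints[OF \<open>polyhedron P\<close>] by blast
  define Cs where "Cs = CP \<union> (\<lambda>v. (v, v \<bullet> z)) ` E \<union> (\<lambda>v. (- v, - (v \<bullet> z))) ` E"
  define Z where "Z = {x. \<forall>q\<in>Cs. fst q \<bullet> x \<le> snd q}"
  have "finite Cs" unfolding Cs_def using \<open>finite CP\<close> \<open>finite E\<close> by simp
  have Z_iff: "x \<in> Z \<longleftrightarrow> x \<in> P \<and> (\<forall>v\<in>E. v \<bullet> (x - z) = 0)" for x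
  proof -
    have "x \<in> Z \<longleftrightarrow> x \<in> P \<and> (\<forall>v\<in>E. v \<bullet> x \<le> v \<bullet> z \<and> v \<bullet> z \<le> v \<bullet> x)"
      unfolding Z_def Cs_def P_eq by (auto simp: ball_Un)
    moreover have "(v \<bullet> x \<le> v \<bullet> z \<and> v \<bullet> z \<le> v \<bullet> x) \<longleftrightarrow> v \<bullet> (x - z) = 0" for v
      by (auto simp: inner_diff_right)
    ultimately show ?thesis by simp
  qed
  have "z \<in> Z" using \<open>z \<in> P\<close> Z_iff by simp
  obtain Ch where "Ch \<ge> 0" and hoffman: "\<And>x. infdist x Z \<le> Ch * (\<Sum>q\<in>Cs. max 0 (fst q \<bullet> x - snd q))"
    using hoffman_error_bound[OF \<open>finite Cs\<close> Z_def] \<open>z \<in> Z\<close> by blast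
  have violation_bound: "max 0 (fst q \<bullet> x - snd q) \<le> G x + K * sqrt (G x)" if "q \<in> Cs" "x \<in> P" for q x
  proof -
    have "0 \<le> G x + K * sqrt (G x)" using \<open>0 \<le> K\<close> G_nonneg[OF \<open>x \<in> P\<close>] by simp
    then show ?thesis
      using \<open>q \<in> Cs\<close> \<open>x \<in> P\<close> bound[of _ x] unfolding Cs_def P_eq
      by (fastforce simp: inner_diff_right)
  qed
  show ?thesis
  proof (intro exI[of _ "Ch * card Cs * (1 + K)"] conjI ballI)
    show "0 \<le> Ch * card Cs * (1 + K)" using \<open>Ch \<ge> 0\<close> \<open>0 \<le> K\<close> by simp
    fix x assume "x \<in> P"
    have "Z \<subseteq> {x\<in>P. G x = 0}" using zeros Z_iff by blast
    then have "infdist x {x\<in>P. G x = 0} \<le> infdist x Z"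
      using \<open>z \<in> Z\<close> by (intro infdist_mono) auto
    also have "\<dots> \<le> Ch * (\<Sum>q\<in>Cs. max 0 (fst q \<bullet> x - snd q))" by (rule hoffman)
    also have "\<dots> \<le> Ch * (card Cs * (G x + K * sqrt (G x)))"
      using violation_bound \<open>x \<in> P\<close> \<open>Ch \<ge> 0\<close> by (intro mult_left_mono sum_bounded_above) auto
    also have "\<dots> \<le> Ch * (card Cs * ((1 + K) * (sqrt (G x) + G x)))"
      using G_nonneg[OF \<open>x \<in> P\<close>] \<open>0 \<le> K\<close> \<open>Ch \<ge> 0\<close>
      by (intro mult_left_mono) (auto simp: algebra_simps)
    finally show "infdist x {x\<in>P. G x = 0} \<le> Ch * card Cs * (1 + K) * (sqrt (G x) + G x)"
      by (simp add: mult.assoc)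
  qed
qed

theorem convex_quadratic_error_bound:
  fixes G :: "real^'n \<Rightarrow> real"
  assumes "quadratic_fun G" "polyhedron P" "convex_on P G" and G_nonneg: "\<And>x. x \<in> P \<Longrightarrow> 0 \<le> G x"
    and "z \<in> P" "G z = 0"
  shows "\<exists>C\<ge>0. \<forall>x\<in>P. infdist x {x\<in>P. G x = 0} \<le> C * (sqrt (G x) + G x)"
proof -
  obtain Q a \<alpha> where G: "\<And>x. G x = x \<bullet> (Q *v x) + a \<bullet> x + \<alpha>"
    using assms(1) unfolding quadratic_fun_def by blast
  define S where "S w = w \<bullet> (Q *v w)" for w
  define cv where "cv u = Q *v u + transpose Q *v u" for u
  define g where "g = cv z + a"
  have split: "G x = g \<bullet> (x - z) + S (x - z)" "0 \<le> g \<bullet> (x - z)" "0 \<le> S (x - z)" if "x \<in> P" for x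
    using convex_quadratic_vanishing_split[OF G \<open>convex_on P G\<close> G_nonneg \<open>z \<in> P\<close> \<open>G z = 0\<close> that]
    by (simp_all add: g_def cv_def S_def)
  have S_nonneg: "0 \<le> S (x - y)" if "x \<in> P" "y \<in> P" for x y
    unfolding S_def using quadratic_form_nonneg_if_convex_on[OF G \<open>convex_on P G\<close> that] .
  obtain B where B: "B \<subseteq> (\<lambda>x. x - z) ` P" "independent B" "(\<lambda>x. x - z) ` P \<subseteq> span B"
    by (rule maximal_independent_subset)
  have "finite B" using B(2) by (rule finiteI_independent)
  define K where "K = (\<Sum>u\<in>B. 2 * sqrt (S u))"
  have S_B: "0 \<le> S u" if "u \<in> B" for u using that B(1) S_nonneg \<open>z \<in> P\<close> by auto
  then have "0 \<le> K" unfolding K_def by (auto intro: sum_nonneg)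
  \<comment> \<open>The zero set of G in P is cut out by the equations \<open>g \<bullet> (x - z) = 0\<close> and
     \<open>cv u \<bullet> (x - z) = 0\<close> for u in a basis of \<open>P - z\<close>; on P their violations are
     \<open>O(G + sqrt G)\<close> by the semidefinite Cauchy-Schwarz inequality.\<close>
  show ?thesis
  proof (rule zero_set_error_bound_from_equations[where E = "insert g (cv ` B)"])
    fix x assume "x \<in> P" and orth: "\<forall>v\<in>insert g (cv ` B). v \<bullet> (x - z) = 0"
    moreover have "x - z \<in> span B" using B(3) \<open>x \<in> P\<close> by auto
    ultimately have "S (x - z) = 0"
      unfolding S_def by (intro quadratic_form_zero_if_orthogonal_span[OF \<open>finite B\<close>]) (auto simp: cv_def)
    then show "G x = 0" using split(1)[OF \<open>x \<in> P\<close>] orth by simp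
  next
    fix v x assume "v \<in> insert g (cv ` B)" "x \<in> P"
    have "0 \<le> G x" "0 \<le> K * sqrt (G x)" using \<open>0 \<le> K\<close> G_nonneg[OF \<open>x \<in> P\<close>] by simp_all
    from \<open>v \<in> insert g (cv ` B)\<close> consider "v = g" | u where "u \<in> B" "v = cv u" by blast
    then show "\<bar>v \<bullet> (x - z)\<bar> \<le> G x + K * sqrt (G x)"
    proof cases
      case 1
      then show ?thesis using split[OF \<open>x \<in> P\<close>] \<open>0 \<le> K * sqrt (G x)\<close> by simp
    next
      case (2 u)
      obtain p where "p \<in> P" "u = p - z" using \<open>u \<in> B\<close> B(1) by auto
      have "\<bar>cv u \<bullet> (x - z)\<bar> \<le> 2 * sqrt (S u) * sqrt (S (x - z))"
        unfolding cv_def S_def \<open>u = p - z\<close> using S_nonneg[OF \<open>x \<in> P\<close> \<open>z \<in> P\<close>]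
        by (intro semidefinite_cauchy_schwarz quadratic_form_nonneg_on_lines[OF polyhedron_imp_convex[OF
              \<open>polyhedron P\<close>] S_nonneg[unfolded S_def] \<open>p \<in> P\<close> \<open>x \<in> P\<close> \<open>z \<in> P\<close>])
          (auto simp: S_def)
      also have "\<dots> \<le> K * sqrt (G x)"
        using \<open>finite B\<close> \<open>u \<in> B\<close> S_B split[OF \<open>x \<in> P\<close>] \<open>0 \<le> K\<close> unfolding K_def
        by (intro mult_mono member_le_sum real_sqrt_le_mono) auto
      finally show ?thesis unfolding \<open>v = cv u\<close> using \<open>0 \<le> G x\<close> by linarith
    qed
  qed (use assms \<open>finite B\<close> \<open>0 \<le> K\<close> in auto)
qed

section \<open>Strong convexity and first-order conditions\<close>

lemma norm_convex_combination_sq: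
  fixes x y :: "'a::real_inner"
  shows "(norm ((1 - t) *\<^sub>R x + t *\<^sub>R y))\<^sup>2
    = (1 - t) * (norm x)\<^sup>2 + t * (norm y)\<^sup>2 - t * (1 - t) * (norm (x - y))\<^sup>2"
  by (simp add: power2_norm_eq_inner inner_commute algebra_simps)

lemma strongly_convex_on_iff_convex_on:
  fixes h :: "'a::real_inner \<Rightarrow> real"
  assumes "convex K"
  shows "strongly_convex_on K h \<longleftrightarrow> (\<exists>\<mu>>0. convex_on K (\<lambda>x. h x - \<mu> / 2 * (norm x)\<^sup>2))"
proof -
  have shift: "(1 - t) * (h x - \<mu> / 2 * (norm x)\<^sup>2) + t * (h y - \<mu> / 2 * (norm y)\<^sup>2)
      + \<mu> / 2 * (norm ((1 - t) *\<^sub>R x + t *\<^sub>R y))\<^sup>2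
    = (1 - t) * h x + t * h y - \<mu> / 2 * t * (1 - t) * (norm (x - y))\<^sup>2" for x y :: 'a and t \<mu> :: real
    unfolding norm_convex_combination_sq by (simp add: field_simps)
  show ?thesis
  proof
    assume "strongly_convex_on K h"
    then obtain \<mu> where "\<mu> > 0" and sc: "\<forall>x\<in>K. \<forall>y\<in>K. \<forall>t. 0 \<le> t \<and> t \<le> 1 \<longrightarrow>
        h ((1 - t) *\<^sub>R x + t *\<^sub>R y) \<le> (1 - t) * h x + t * h y - \<mu> / 2 * t * (1 - t) * (norm (x - y))\<^sup>2"
      unfolding strongly_convex_on_def by blast
    have "convex_on K (\<lambda>x. h x - \<mu> / 2 * (norm x)\<^sup>2)"
    proof (rule convex_onI[OF _ assms])
      fix t :: real and x y assume "0 < t" "t < 1" "x \<in> K" "y \<in> K"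
      then have "h ((1 - t) *\<^sub>R x + t *\<^sub>R y) \<le> (1 - t) * h x + t * h y - \<mu> / 2 * t * (1 - t) * (norm (x - y))\<^sup>2"
        using sc by simp
      then show "h ((1 - t) *\<^sub>R x + t *\<^sub>R y) - \<mu> / 2 * (norm ((1 - t) *\<^sub>R x + t *\<^sub>R y))\<^sup>2
          \<le> (1 - t) * (h x - \<mu> / 2 * (norm x)\<^sup>2) + t * (h y - \<mu> / 2 * (norm y)\<^sup>2)"
        using shift[of t x \<mu> y] by linarith
    qed
    then show "\<exists>\<mu>>0. convex_on K (\<lambda>x. h x - \<mu> / 2 * (norm x)\<^sup>2)" using \<open>\<mu> > 0\<close> by blast
  next
    assume "\<exists>\<mu>>0. convex_on K (\<lambda>x. h x - \<mu> / 2 * (norm x)\<^sup>2)"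
    then obtain \<mu> where "\<mu> > 0" and cvx: "convex_on K (\<lambda>x. h x - \<mu> / 2 * (norm x)\<^sup>2)" by blast
    show "strongly_convex_on K h"
      unfolding strongly_convex_on_def
    proof (intro exI[of _ \<mu>] conjI \<open>\<mu> > 0\<close> ballI allI impI)
      fix x y and t :: real assume "x \<in> K" "y \<in> K" "0 \<le> t \<and> t \<le> 1"
      then show "h ((1 - t) *\<^sub>R x + t *\<^sub>R y) \<le> (1 - t) * h x + t * h y - \<mu> / 2 * t * (1 - t) * (norm (x - y))\<^sup>2"
        using convex_onD[OF cvx, of t x y] shift[of t x \<mu> y] by simp
    qed
  qed
qed

lemma has_derivative_difference_quotient:
  fixes f :: "'a::real_normed_vector \<Rightarrow> real"
  assumes "(f has_derivative f') (at x)"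
  shows "((\<lambda>t. (f (x + t *\<^sub>R d) - f x) / t) \<longlongrightarrow> f' d) (at_right 0)"
proof -
  have line: "((\<lambda>t::real. x + t *\<^sub>R d) has_derivative (\<lambda>t. t *\<^sub>R d)) (at 0)"
    by (auto intro!: derivative_eq_intros)
  have "((f \<circ> (\<lambda>t. x + t *\<^sub>R d)) has_derivative (f' \<circ> (\<lambda>t. t *\<^sub>R d))) (at 0)"
    by (rule diff_chain_at[OF line]) (simp add: assms)
  moreover have "f' \<circ> (\<lambda>t. t *\<^sub>R d) = (\<lambda>t. f' d * t)"
    using linear_scale[OF has_derivative_linear[OF assms]] by (auto simp: mult.commute)
  ultimately have "((\<lambda>t. f (x + t *\<^sub>R d)) has_field_derivative f' d) (at 0 within {0<..})"
    by (auto simp: has_field_derivative_def o_def intro: has_derivative_at_withinI)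
  then show ?thesis by (simp add: has_field_derivative_iff)
qed

lemma convex_on_ge_linearization:
  fixes \<phi> :: "'a::real_normed_vector \<Rightarrow> real"
  assumes "convex_on K \<phi>" "x \<in> K" "y \<in> K" "(\<phi> has_derivative \<phi>') (at x)"
  shows "\<phi> x + \<phi>' (y - x) \<le> \<phi> y"
proof -
  have "\<forall>\<^sub>F t in at_right 0. (\<phi> (x + t *\<^sub>R (y - x)) - \<phi> x) / t \<le> \<phi> y - \<phi> x"
    unfolding eventually_at_right_field
  proof (intro exI[of _ 1] conjI allI impI)
    fix t :: real assume "0 < t" "t < 1"
    moreover have "x + t *\<^sub>R (y - x) = (1 - t) *\<^sub>R x + t *\<^sub>R y" by (simp add: algebra_simps)
    ultimately have "\<phi> (x + t *\<^sub>R (y - x)) - \<phi> x \<le> t * (\<phi> y - \<phi> x)"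
      using convex_onD[OF assms(1), of t x y] assms(2,3) by (simp add: algebra_simps)
    then show "(\<phi> (x + t *\<^sub>R (y - x)) - \<phi> x) / t \<le> \<phi> y - \<phi> x"
      using \<open>0 < t\<close> by (simp add: divide_le_eq mult.commute)
  qed simp
  then have "\<phi>' (y - x) \<le> \<phi> y - \<phi> x"
    by (intro tendsto_upperbound[OF has_derivative_difference_quotient[OF assms(4)]]) simp_all
  then show ?thesis by simp
qed

lemma strongly_convex_on_quadratic_minorant:
  fixes h :: "'a::real_inner \<Rightarrow> real"
  assumes "strongly_convex_on K h" "convex K"
  obtains \<mu> where "\<mu> > 0"
    "\<And>x y h'. x \<in> K \<Longrightarrow> y \<in> K \<Longrightarrow> (h has_derivative h') (at x) \<Longrightarrow>
       h x + h' (y - x) + \<mu> / 2 * (norm (y - x))\<^sup>2 \<le> h y"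
proof -
  obtain \<mu> where "\<mu> > 0" and cvx: "convex_on K (\<lambda>x. h x - \<mu> / 2 * (norm x)\<^sup>2)"
    using assms strongly_convex_on_iff_convex_on by blast
  have "h x + h' (y - x) + \<mu> / 2 * (norm (y - x))\<^sup>2 \<le> h y"
    if "x \<in> K" "y \<in> K" and h': "(h has_derivative h') (at x)" for x y h'
  proof -
    have "((\<lambda>x. h x - \<mu> / 2 * (x \<bullet> x)) has_derivative (\<lambda>v. h' v - \<mu> / 2 * (x \<bullet> v + v \<bullet> x))) (at x)"
      using h' by (auto intro!: derivative_eq_intros)
    then have "h x - \<mu> / 2 * (x \<bullet> x) + (h' (y - x) - \<mu> / 2 * (x \<bullet> (y - x) + (y - x) \<bullet> x))
        \<le> h y - \<mu> / 2 * (y \<bullet> y)"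
      using convex_on_ge_linearization[OF cvx[unfolded power2_norm_eq_inner] that(1,2)] by blast
    then show ?thesis
      by (simp add: power2_norm_eq_inner inner_commute algebra_simps)
  qed
  then show thesis using that \<open>\<mu> > 0\<close> by blast
qed

lemma convex_on_congI:
  assumes "convex_on S f" "\<And>x. x \<in> S \<Longrightarrow> f x = g x"
  shows "convex_on S g"
proof (rule convex_onI)
  show "convex S" using assms(1) by (rule convex_on_imp_convex)
  fix t :: real and x y assume "0 < t" "t < 1" "x \<in> S" "y \<in> S"
  moreover have "(1 - t) *\<^sub>R x + t *\<^sub>R y \<in> S"
    using calculation \<open>convex S\<close> by (intro convexD_alt[of S x y t, simplified]) auto
  ultimately show "g ((1 - t) *\<^sub>R x + t *\<^sub>R y) \<le> (1 - t) * g x + t * g y"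
    using convex_onD[OF assms(1), of t x y] assms(2) by simp
qed

lemma convex_on_affine: "convex S \<Longrightarrow> convex_on S (\<lambda>x. a \<bullet> x + b)"
  by (rule convex_onI) (simp_all add: algebra_simps)

lemma convex_on_norm_affine_sq:
  fixes A :: "real^'n^'m"
  assumes "convex S"
  shows "convex_on S (\<lambda>x. (norm (A *v x - y))\<^sup>2)"
proof (rule convex_onI[OF _ assms])
  fix t :: real and u v assume "0 < t" "t < 1"
  have "A *v ((1 - t) *\<^sub>R u + t *\<^sub>R v) - y = (1 - t) *\<^sub>R (A *v u - y) + t *\<^sub>R (A *v v - y)"
    by (simp add: algebra_simps)
  then show "(norm (A *v ((1 - t) *\<^sub>R u + t *\<^sub>R v) - y))\<^sup>2
      \<le> (1 - t) * (norm (A *v u - y))\<^sup>2 + t * (norm (A *v v - y))\<^sup>2"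
    using \<open>0 < t\<close> \<open>t < 1\<close> by (simp add: norm_convex_combination_sq)
qed

lemma convex_fun_combination_le:
  assumes "convex_fun p" "p x \<le> ereal a" "p y \<le> ereal b" "0 \<le> t" "t \<le> 1"
  shows "p ((1 - t) *\<^sub>R x + t *\<^sub>R y) \<le> ereal ((1 - t) * a + t * b)"
proof -
  have "(x, a) \<in> epigraph_e p" "(y, b) \<in> epigraph_e p" using assms(2,3) by (simp_all add: epigraph_e_def)
  then have "(1 - t) *\<^sub>R (x, a) + t *\<^sub>R (y, b) \<in> epigraph_e p"
    using assms(1,4,5) unfolding convex_fun_def by (intro convexD_alt) auto
  then show ?thesis by (simp add: epigraph_e_def)
qed

lemma convex_on_real_of_ereal_edom:
  assumes "proper_fun p" "convex_fun p"
  shows "convex_on (edom p) (\<lambda>x. real_of_ereal (p x))"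
proof -
  have finite: "p x = ereal (real_of_ereal (p x))" if "x \<in> edom p" for x
    using that assms(1) by (cases "p x") (auto simp: edom_def proper_fun_def)
  have comb: "(1 - t) *\<^sub>R x + t *\<^sub>R y \<in> edom p \<and>
      real_of_ereal (p ((1 - t) *\<^sub>R x + t *\<^sub>R y)) \<le> (1 - t) * real_of_ereal (p x) + t * real_of_ereal (p y)"
    if "x \<in> edom p" "y \<in> edom p" "0 \<le> t" "t \<le> 1" for x y t
  proof -
    have le: "p ((1 - t) *\<^sub>R x + t *\<^sub>R y) \<le> ereal ((1 - t) * real_of_ereal (p x) + t * real_of_ereal (p y))"
      using that finite by (intro convex_fun_combination_le[OF assms(2)]) auto
    then have "(1 - t) *\<^sub>R x + t *\<^sub>R y \<in> edom p" by (auto simp: edom_def intro: le_less_trans)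
    with le show ?thesis using finite by (metis ereal_less_eq(3))
  qed
  have "convex (edom p)" using comb by (auto simp: convex_alt)
  then show ?thesis using comb by (intro convex_onI) auto
qed

lemma convex_on_minimizer_first_order:
  fixes \<psi> \<phi> :: "'a::real_normed_vector \<Rightarrow> real"
  assumes "convex_on D \<phi>" "x \<in> D" "y \<in> D" "(\<psi> has_derivative \<psi>') (at x)"
    and min: "\<And>z. z \<in> D \<Longrightarrow> \<psi> x + \<phi> x \<le> \<psi> z + \<phi> z"
  shows "\<phi> x \<le> \<psi>' (y - x) + \<phi> y"
proof -
  have "\<forall>\<^sub>F t in at_right 0. \<phi> x - \<phi> y \<le> (\<psi> (x + t *\<^sub>R (y - x)) - \<psi> x) / t"
    unfolding eventually_at_right_field
  proof (intro exI[of _ 1] conjI allI impI)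
    fix t :: real assume "0 < t" "t < 1"
    have xt: "x + t *\<^sub>R (y - x) = (1 - t) *\<^sub>R x + t *\<^sub>R y" by (simp add: algebra_simps)
    then have "x + t *\<^sub>R (y - x) \<in> D"
      using \<open>0 < t\<close> \<open>t < 1\<close> assms(2,3) convex_on_imp_convex[OF assms(1)] by (auto intro: convexD_alt)
    moreover have "\<phi> (x + t *\<^sub>R (y - x)) \<le> (1 - t) * \<phi> x + t * \<phi> y"
      unfolding xt using convex_onD[OF assms(1), of t x y] assms(2,3) \<open>0 < t\<close> \<open>t < 1\<close> by simp
    ultimately have "\<psi> x + \<phi> x \<le> \<psi> (x + t *\<^sub>R (y - x)) + ((1 - t) * \<phi> x + t * \<phi> y)"
      using min by fastforce
    then have "t * (\<phi> x - \<phi> y) \<le> \<psi> (x + t *\<^sub>R (y - x)) - \<psi> x" by (simp add: algebra_simps)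
    then show "\<phi> x - \<phi> y \<le> (\<psi> (x + t *\<^sub>R (y - x)) - \<psi> x) / t"
      using \<open>0 < t\<close> by (simp add: le_divide_eq mult.commute)
  qed simp
  then have "\<phi> x - \<phi> y \<le> \<psi>' (y - x)"
    by (intro tendsto_lowerbound[OF has_derivative_difference_quotient[OF assms(4)]]) simp_all
  then show ?thesis by simp
qed

lemma infdist_le_subdiff_if_quadratic_growth:
  fixes f :: "'a::euclidean_space \<Rightarrow> ereal"
  assumes "closed \<Omega>" "\<Omega> \<noteq> {}" "\<alpha> > 0"
    and finite: "\<And>y. y \<in> \<Omega> \<Longrightarrow> \<bar>f y\<bar> \<noteq> \<infinity>"
    and growth: "\<And>y. y \<in> \<Omega> \<Longrightarrow> f y + ereal (\<alpha> * (infdist x \<Omega>)\<^sup>2) \<le> f x"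
  shows "ereal (infdist x \<Omega>) \<le> ereal (1 / \<alpha>) * edist_set 0 (subdiff f x)"
proof (cases "subdiff f x = {}")
  case True
  then show ?thesis using \<open>\<alpha> > 0\<close> by (simp add: edist_set_def)
next
  case False
  define d where "d = infdist x \<Omega>"
  obtain y where "y \<in> \<Omega>" "d = dist x y"
    using infdist_attains_inf[OF assms(1,2)] unfolding d_def by blast
  have "\<alpha> * d \<le> norm v" if "v \<in> subdiff f x" for v
  proof -
    have "f x < \<infinity>" "f x + ereal (v \<bullet> (y - x)) \<le> f y"
      using that unfolding subdiff_def by blast+
    moreover have "f y + ereal (\<alpha> * d\<^sup>2) \<le> f x" using growth[OF \<open>y \<in> \<Omega>\<close>] by (simp add: d_def)
    ultimately have "\<alpha> * d\<^sup>2 \<le> - (v \<bullet> (y - x))"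
      using finite[OF \<open>y \<in> \<Omega>\<close>] by (cases "f x"; cases "f y") auto
    also have "\<dots> \<le> norm v * d"
      using Cauchy_Schwarz_ineq2[of v "y - x"] \<open>d = dist x y\<close> by (simp add: dist_norm norm_minus_commute)
    finally have "(\<alpha> * d) * d \<le> norm v * d" by (simp add: power2_eq_square)
    then show ?thesis
      using infdist_nonneg[of x \<Omega>] by (cases "d = 0") (auto simp: d_def mult_le_cancel_right)
  qed
  then have "\<alpha> * d \<le> infdist 0 (subdiff f x)"
    unfolding infdist_def using False by (auto intro!: cINF_greatest simp: dist_norm)
  then have "d \<le> 1 / \<alpha> * infdist 0 (subdiff f x)" using \<open>\<alpha> > 0\<close> by (simp add: field_simps)
  then show ?thesis using False by (simp add: edist_set_def d_def)
qed

section \<open>Separable strongly convex functions\<close>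

lemma convex_on_minus_sq_if_second_derivative_ge:
  fixes \<phi> :: "real \<Rightarrow> real"
  assumes "convex I"
    and "\<And>s. s \<in> I \<Longrightarrow> (\<phi> has_real_derivative \<phi>' s) (at s)"
    and "\<And>s. s \<in> I \<Longrightarrow> (\<phi>' has_real_derivative \<phi>'' s) (at s)"
    and "\<And>s. s \<in> I \<Longrightarrow> \<mu> \<le> \<phi>'' s"
  shows "convex_on I (\<lambda>s. \<phi> s - \<mu> / 2 * s\<^sup>2)"
  using assms
  by (intro f''_ge0_imp_convex[where f' = "\<lambda>s. \<phi>' s - \<mu> * s" and f'' = "\<lambda>s. \<phi>'' s - \<mu>"])
    (auto intro!: derivative_eq_intros)

lemma power2_norm_vec: "(norm z)\<^sup>2 = (\<Sum>i\<in>UNIV. (z $ i)\<^sup>2)" for z :: "real^'n"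
  unfolding power2_norm_eq_inner inner_vec_def by (simp add: power2_eq_square)

lemma strongly_convex_on_coordinate_sum:
  fixes \<phi> :: "'n::finite \<Rightarrow> real \<Rightarrow> real" and K :: "(real^'n) set"
  assumes "\<mu> > 0" "\<And>i. convex_on I (\<lambda>s. \<phi> i s - \<mu> / 2 * s\<^sup>2)" "convex K"
    and "\<And>y i. y \<in> K \<Longrightarrow> y $ i \<in> I"
  shows "strongly_convex_on K (\<lambda>y. \<Sum>i\<in>UNIV. \<phi> i (y $ i))"
proof -
  have shift: "(\<Sum>i\<in>UNIV. \<phi> i (y $ i)) - \<mu> / 2 * (norm y)\<^sup>2 = (\<Sum>i\<in>UNIV. \<phi> i (y $ i) - \<mu> / 2 * (y $ i)\<^sup>2)"
    for y :: "real^'n"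
    by (simp add: power2_norm_vec sum_subtractf sum_distrib_left)
  have "convex_on K (\<lambda>y. (\<Sum>i\<in>UNIV. \<phi> i (y $ i)) - \<mu> / 2 * (norm y)\<^sup>2)"
    unfolding shift
  proof (rule convex_onI[OF _ \<open>convex K\<close>])
    fix t :: real and x y assume "0 < t" "t < 1" "x \<in> K" "y \<in> K"
    then show "(\<Sum>i\<in>UNIV. \<phi> i (((1 - t) *\<^sub>R x + t *\<^sub>R y) $ i) - \<mu> / 2 * (((1 - t) *\<^sub>R x + t *\<^sub>R y) $ i)\<^sup>2)
        \<le> (1 - t) * (\<Sum>i\<in>UNIV. \<phi> i (x $ i) - \<mu> / 2 * (x $ i)\<^sup>2)
          + t * (\<Sum>i\<in>UNIV. \<phi> i (y $ i) - \<mu> / 2 * (y $ i)\<^sup>2)"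
      using convex_onD[OF assms(2), of t "x $ i" "y $ i" for i] assms(4)
      by (simp add: sum_distrib_left flip: sum.distrib) (intro sum_mono, auto)
  qed
  then show ?thesis using assms(1,3) strongly_convex_on_iff_convex_on by blast
qed

lemma strongly_convex_on_compacts_sum_squares:
  "strongly_convex_on_compacts (\<lambda>y::real^'n. \<Sum>i\<in>UNIV. (y $ i - b $ i)\<^sup>2 / 2)"
  unfolding strongly_convex_on_compacts_def
proof (intro allI impI)
  fix K :: "(real^'n) set" assume "compact K \<and> convex K"
  have "convex_on UNIV (\<lambda>s. (s - b $ i)\<^sup>2 / 2 - 1 / 2 * s\<^sup>2)" for i
    by (rule convex_on_minus_sq_if_second_derivative_ge[where \<phi>' = "\<lambda>s. s - b $ i" and \<phi>'' = "\<lambda>_. 1"])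
      (auto intro!: derivative_eq_intros)
  then show "strongly_convex_on K (\<lambda>y. \<Sum>i\<in>UNIV. (y $ i - b $ i)\<^sup>2 / 2)"
    using \<open>compact K \<and> convex K\<close>
    by (intro strongly_convex_on_coordinate_sum[where \<mu> = 1 and I = UNIV]) auto
qed

lemma logistic_loss_strongly_convex_on_interval:
  fixes \<beta> \<rho> :: real
  assumes "\<beta>\<^sup>2 = 1"
  shows "convex_on {-\<rho>..\<rho>} (\<lambda>s. ln (1 + exp (- (\<beta> * s))) - exp (- \<rho>) / (1 + exp \<rho>)\<^sup>2 / 2 * s\<^sup>2)"
proof (rule convex_on_minus_sq_if_second_derivative_ge[where \<phi>' = "\<lambda>s. - \<beta> / (1 + exp (\<beta> * s))"
      and \<phi>'' = "\<lambda>s. exp (\<beta> * s) / (1 + exp (\<beta> * s))\<^sup>2"])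
  fix s :: real
  have pos: "0 < 1 + exp u" for u :: real by (simp add: add_pos_pos)
  show "((\<lambda>s. ln (1 + exp (- (\<beta> * s)))) has_real_derivative - \<beta> / (1 + exp (\<beta> * s))) (at s)"
    using pos[of "- (\<beta> * s)"]
    by (auto intro!: derivative_eq_intros simp: exp_minus field_simps)
  show "((\<lambda>s. - \<beta> / (1 + exp (\<beta> * s))) has_real_derivative exp (\<beta> * s) / (1 + exp (\<beta> * s))\<^sup>2) (at s)"
    using pos[of "\<beta> * s"] assms
    by (auto intro!: derivative_eq_intros simp: field_simps power2_eq_square)
  assume "s \<in> {-\<rho>..\<rho>}"
  moreover have "\<beta> = 1 \<or> \<beta> = -1" using assms by (simp add: power2_eq_1_iff)
  ultimately have "\<bar>\<beta> * s\<bar> \<le> \<rho>" by auto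
  then have "exp (- \<rho>) \<le> exp (\<beta> * s)" "(1 + exp (\<beta> * s))\<^sup>2 \<le> (1 + exp \<rho>)\<^sup>2"
    by (auto intro!: power_mono simp: abs_le_iff)
  then show "exp (- \<rho>) / (1 + exp \<rho>)\<^sup>2 \<le> exp (\<beta> * s) / (1 + exp (\<beta> * s))\<^sup>2"
    using pos[of "\<beta> * s"] by (intro frac_le) auto
qed simp

lemma strongly_convex_on_compacts_logistic:
  fixes b :: "real^'n"
  assumes "\<forall>i. b $ i = -1 \<or> b $ i = 1"
  shows "strongly_convex_on_compacts (\<lambda>y::real^'n. \<Sum>i\<in>UNIV. ln (1 + exp (- (b $ i * y $ i))))"
  unfolding strongly_convex_on_compacts_def
proof (intro allI impI)
  fix K :: "(real^'n) set" assume K: "compact K \<and> convex K"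
  then obtain \<rho> where \<rho>: "\<And>y. y \<in> K \<Longrightarrow> norm y \<le> \<rho>" using compact_imp_bounded bounded_iff by metis
  have "y $ i \<in> {-\<rho>..\<rho>}" if "y \<in> K" for y i
    using component_le_norm_cart[of y i] \<rho>[OF that] by auto
  moreover have "(b $ i)\<^sup>2 = 1" for i using assms by (metis power2_minus one_power2)
  moreover have "0 < exp (- \<rho>) / (1 + exp \<rho>)\<^sup>2"
    using add_pos_pos[OF zero_less_one exp_gt_zero[of \<rho>]] by simp
  ultimately show "strongly_convex_on K (\<lambda>y. \<Sum>i\<in>UNIV. ln (1 + exp (- (b $ i * y $ i))))"
    using K logistic_loss_strongly_convex_on_interval
    by (intro strongly_convex_on_coordinate_sum[where \<mu> = "exp (- \<rho>) / (1 + exp \<rho>)\<^sup>2" and I = "{-\<rho>..\<rho>}"])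
      auto
qed

section \<open>Quadratic growth of the composite objective\<close>

lemma finite_uniform_pos_factor:
  fixes u v :: "'a \<Rightarrow> real"
  assumes "finite S" "\<And>P. P \<in> S \<Longrightarrow> \<exists>\<alpha>>0. \<forall>x\<in>T P. \<alpha> * u x \<le> v x" and "\<And>x. 0 \<le> u x"
  shows "\<exists>\<alpha>>0. \<forall>P\<in>S. \<forall>x\<in>T P. \<alpha> * u x \<le> v x"
proof -
  have "\<forall>\<^sub>F \<alpha> in at_right 0. \<forall>x\<in>T P. \<alpha> * u x \<le> v x" if P: "P \<in> S" for P
  proof -
    obtain \<alpha>P where "\<alpha>P > 0" and \<alpha>P: "\<forall>x\<in>T P. \<alpha>P * u x \<le> v x" using assms(2)[OF P] by blast
    have "\<alpha> * u x \<le> v x" if "\<alpha> < \<alpha>P" "x \<in> T P" for \<alpha> x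
    proof -
      have "\<alpha> * u x \<le> \<alpha>P * u x" using \<open>\<alpha> < \<alpha>P\<close> assms(3) by (intro mult_right_mono) auto
      also have "\<dots> \<le> v x" using \<alpha>P \<open>x \<in> T P\<close> by blast
      finally show ?thesis .
    qed
    then show ?thesis unfolding eventually_at_right_field using \<open>\<alpha>P > 0\<close> by blast
  qed
  then have "\<forall>\<^sub>F \<alpha> in at_right 0. 0 < \<alpha> \<and> (\<forall>P\<in>S. \<forall>x\<in>T P. \<alpha> * u x \<le> v x)"
    using \<open>finite S\<close> by (simp add: eventually_ball_finite_distrib eventually_conj_iff eventually_at_right_less)
  then show ?thesis using eventually_happens'[of "at_right (0::real)"] by force
qed

lemma power2_le_if_le_sqrt_plus:
  fixes d R g C :: real
  assumes "0 \<le> d" "d \<le> R" "0 \<le> g" "0 \<le> C" "d \<le> C * (sqrt g + g)"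
  shows "d\<^sup>2 \<le> (4 * C\<^sup>2 + R\<^sup>2 + 1) * g"
proof (cases "g \<le> 1")
  case True
  then have "sqrt g \<le> 1" by simp
  then have "sqrt g * sqrt g \<le> sqrt g" by (rule mult_left_le) (simp add: \<open>0 \<le> g\<close>)
  then have "g \<le> sqrt g" using \<open>0 \<le> g\<close> by simp
  then have "C * (sqrt g + g) \<le> C * (2 * sqrt g)" using \<open>0 \<le> C\<close> by (intro mult_left_mono) auto
  then have "d \<le> 2 * C * sqrt g" using assms(5) by linarith
  then have "d\<^sup>2 \<le> (2 * C * sqrt g)\<^sup>2" using \<open>0 \<le> d\<close> by (intro power_mono) auto
  also have "\<dots> = 4 * C\<^sup>2 * g" using \<open>0 \<le> g\<close> by (simp add: power_mult_distrib)
  also have "\<dots> \<le> (4 * C\<^sup>2 + R\<^sup>2 + 1) * g" using \<open>0 \<le> g\<close> by (intro mult_right_mono) auto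
  finally show ?thesis .
next
  case False
  have "d\<^sup>2 \<le> R\<^sup>2" using assms(1,2) by (intro power_mono)
  also have "\<dots> \<le> R\<^sup>2 * g" using False by (simp add: mult_le_cancel_left1)
  also have "\<dots> \<le> (4 * C\<^sup>2 + R\<^sup>2 + 1) * g" using False by (intro mult_right_mono) auto
  finally show ?thesis .
qed

locale composite_problem =
  fixes A :: "real^'n^'m" and c :: "real^'n" and lam :: real
    and h :: "real^'m \<Rightarrow> real" and grad :: "real^'m \<Rightarrow> real^'m" and p :: "real^'n \<Rightarrow> ereal"
    and f :: "real^'n \<Rightarrow> ereal" and \<Omega> :: "(real^'n) set"
  assumes lam_pos: "0 < lam"
    and h_gradient: "\<And>y. (h has_derivative (\<lambda>v. grad y \<bullet> v)) (at y)"
    and h_strongly_convex: "strongly_convex_on_compacts h"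
    and p_proper: "proper_fun p" and p_convex: "convex_fun p" and p_piecewise_lq: "piecewise_lq p"
    and f_def: "f = (\<lambda>x. ereal (h (A *v x) - c \<bullet> x) + ereal lam * p x)"
    and \<Omega>_def: "\<Omega> = {x. \<forall>z. f x \<le> f z}"
    and \<Omega>_nonempty: "\<Omega> \<noteq> {}" and \<Omega>_compact: "compact \<Omega>"
begin

definition F :: "real^'n \<Rightarrow> real" where
  "F x = h (A *v x) - c \<bullet> x + lam * real_of_ereal (p x)"

definition xmin :: "real^'n" where
  "xmin = (SOME x. x \<in> \<Omega>)"

definition Flin :: "real^'n \<Rightarrow> real" where
  "Flin x = grad (A *v xmin) \<bullet> (A *v x) - c \<bullet> x + lam * real_of_ereal (p x)"

lemma f_eq_F: "x \<in> edom p \<Longrightarrow> f x = ereal (F x)"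
  using p_proper by (cases "p x") (auto simp: f_def F_def edom_def proper_fun_def)

lemma f_eq_infinity: "x \<notin> edom p \<Longrightarrow> f x = \<infinity>"
  using lam_pos by (simp add: f_def edom_def)

lemma minimizers_subset_edom: "\<Omega> \<subseteq> edom p"
proof
  fix x assume "x \<in> \<Omega>"
  obtain z where "z \<in> edom p" using p_proper by (auto simp: proper_fun_def edom_def)
  then have "f x < \<infinity>" using \<open>x \<in> \<Omega>\<close> f_eq_F[of z] by (auto simp: \<Omega>_def intro: le_less_trans)
  then show "x \<in> edom p" using f_eq_infinity by force
qed

lemma xmin_mem: "xmin \<in> \<Omega>"
  unfolding xmin_def using \<Omega>_nonempty by (auto intro: someI_ex)

lemma F_min_le:
  assumes "x \<in> edom p"
  shows "F xmin \<le> F x"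
proof -
  have "f xmin \<le> f x" using xmin_mem by (simp add: \<Omega>_def)
  then show ?thesis using f_eq_F[OF assms] f_eq_F[of xmin] xmin_mem minimizers_subset_edom by auto
qed

lemma minimizer_iff_F_le:
  assumes "x \<in> edom p"
  shows "x \<in> \<Omega> \<longleftrightarrow> F x \<le> F xmin"
proof
  assume "x \<in> \<Omega>"
  then have "f x \<le> f xmin" by (simp add: \<Omega>_def)
  then show "F x \<le> F xmin" using f_eq_F[OF assms] f_eq_F[of xmin] xmin_mem minimizers_subset_edom by auto
next
  assume "F x \<le> F xmin"
  have "f x \<le> f z" for z
  proof (cases "z \<in> edom p")
    case True
    then show ?thesis using F_min_le[OF True] \<open>F x \<le> F xmin\<close> assms by (simp add: f_eq_F)
  qed (simp add: f_eq_infinity)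
  then show "x \<in> \<Omega>" by (simp add: \<Omega>_def)
qed

lemma F_minimizer: "x \<in> \<Omega> \<Longrightarrow> F x = F xmin"
  using minimizer_iff_F_le F_min_le minimizers_subset_edom by force

lemma Flin_min_le:
  assumes "x \<in> edom p"
  shows "Flin xmin \<le> Flin x"
proof -
  have cvx: "convex_on (edom p) (\<lambda>x. lam * real_of_ereal (p x))"
    using convex_on_real_of_ereal_edom[OF p_proper p_convex] lam_pos by (intro convex_on_cmul) auto
  have "((\<lambda>x. h (A *v x)) has_derivative (\<lambda>v. grad (A *v xmin) \<bullet> (A *v v))) (at xmin)"
    by (rule has_derivative_compose[OF bounded_linear_imp_has_derivative h_gradient]) simp
  then have "((\<lambda>x. h (A *v x) - c \<bullet> x) has_derivative (\<lambda>v. grad (A *v xmin) \<bullet> (A *v v) - c \<bullet> v)) (at xmin)"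
    by (auto intro!: derivative_eq_intros)
  from convex_on_minimizer_first_order[OF cvx _ assms this]
  show ?thesis
    using xmin_mem minimizers_subset_edom F_min_le
    by (force simp: Flin_def F_def algebra_simps)
qed

lemma F_diff_decomposition:
  "F x - F xmin = h (A *v x) - h (A *v xmin) - grad (A *v xmin) \<bullet> (A *v x - A *v xmin) + (Flin x - Flin xmin)"
  by (simp add: F_def Flin_def inner_diff_right)

lemma strong_growth:
  assumes "bounded B"
  obtains \<mu> where "\<mu> > 0"
    "\<And>x. x \<in> B \<Longrightarrow> \<mu> / 2 * (norm (A *v x - A *v xmin))\<^sup>2 + (Flin x - Flin xmin) \<le> F x - F xmin"
proof -
  have "bounded ((\<lambda>x. A *v x) ` insert xmin B)"
    using assms by (intro bounded_linear_image) auto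
  then obtain \<rho> where \<rho>: "\<And>x. x \<in> insert xmin B \<Longrightarrow> norm (A *v x) \<le> \<rho>"
    unfolding bounded_iff by auto
  have "strongly_convex_on (cball 0 \<rho>) h"
    using h_strongly_convex by (simp add: strongly_convex_on_compacts_def)
  then obtain \<mu> where "\<mu> > 0" and minorant: "\<And>y y' h'. y \<in> cball 0 \<rho> \<Longrightarrow> y' \<in> cball 0 \<rho> \<Longrightarrow>
      (h has_derivative h') (at y) \<Longrightarrow> h y + h' (y' - y) + \<mu> / 2 * (norm (y' - y))\<^sup>2 \<le> h y'"
    using strongly_convex_on_quadratic_minorant convex_cball by metis
  have "\<mu> / 2 * (norm (A *v x - A *v xmin))\<^sup>2 + (Flin x - Flin xmin) \<le> F x - F xmin" if "x \<in> B" for x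
    using minorant[OF _ _ h_gradient, of "A *v xmin" "A *v x"] \<rho> that
    unfolding F_diff_decomposition by auto
  with \<open>\<mu> > 0\<close> show thesis by (rule that)
qed

lemma continuous_on_h: "continuous_on UNIV h"
  using h_gradient by (meson continuous_at_imp_continuous_on has_derivative_continuous)

lemma growth_on_piece_disjoint:
  assumes "compact B" "\<And>x. x \<in> B \<Longrightarrow> infdist x \<Omega> \<le> R" "closed P" "P \<subseteq> edom p"
    and quadratic: "\<And>x. x \<in> P \<Longrightarrow> p x = ereal (x \<bullet> (Q *v x) + a \<bullet> x + \<alpha>0)" and "P \<inter> \<Omega> = {}"
  shows "\<exists>\<alpha>>0. \<forall>x\<in>P \<inter> B. \<alpha> * (infdist x \<Omega>)\<^sup>2 \<le> F x - F xmin"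
proof (cases "P \<inter> B = {}")
  case False
  define Fq where "Fq x = h (A *v x) - c \<bullet> x + lam * (x \<bullet> (Q *v x) + a \<bullet> x + \<alpha>0)" for x
  have F_eq: "F x = Fq x" if "x \<in> P" for x using quadratic[OF that] by (simp add: F_def Fq_def)
  have "continuous_on (P \<inter> B) Fq"
    unfolding Fq_def by (intro continuous_intros continuous_on_compose2[OF continuous_on_h]) auto
  then obtain xm where "xm \<in> P \<inter> B" and xm_min: "\<And>x. x \<in> P \<inter> B \<Longrightarrow> Fq xm \<le> Fq x"
    using continuous_attains_inf[OF closed_Int_compact[OF \<open>closed P\<close> \<open>compact B\<close>] False] by blast
  define m where "m = F xm - F xmin"
  have "xm \<in> edom p" "xm \<notin> \<Omega>" using \<open>xm \<in> P \<inter> B\<close> \<open>P \<inter> \<Omega> = {}\<close> \<open>P \<subseteq> edom p\<close> by auto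
  then have "m > 0" using minimizer_iff_F_le by (simp add: m_def)
  have "0 < R\<^sup>2 + 1" using zero_le_power2[of R] by linarith
  show ?thesis
  proof (intro exI[of _ "m / (R\<^sup>2 + 1)"] conjI ballI)
    show "0 < m / (R\<^sup>2 + 1)" using \<open>m > 0\<close> \<open>0 < R\<^sup>2 + 1\<close> by simp
    fix x assume "x \<in> P \<inter> B"
    have "(infdist x \<Omega>)\<^sup>2 \<le> R\<^sup>2 + 1"
      using assms(2) \<open>x \<in> P \<inter> B\<close> infdist_nonneg[of x \<Omega>] power_mono[of "infdist x \<Omega>" R 2] by auto
    then have "m / (R\<^sup>2 + 1) * (infdist x \<Omega>)\<^sup>2 \<le> m / (R\<^sup>2 + 1) * (R\<^sup>2 + 1)"
      using \<open>m > 0\<close> \<open>0 < R\<^sup>2 + 1\<close> by (intro mult_left_mono) auto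
    also have "\<dots> = m" using \<open>0 < R\<^sup>2 + 1\<close> by simp
    also have "m \<le> F x - F xmin"
      using xm_min[OF \<open>x \<in> P \<inter> B\<close>] F_eq \<open>x \<in> P \<inter> B\<close> \<open>xm \<in> P \<inter> B\<close> by (simp add: m_def)
    finally show "m / (R\<^sup>2 + 1) * (infdist x \<Omega>)\<^sup>2 \<le> F x - F xmin" .
  qed
qed (auto intro: exI[of _ 1])

lemma convex_on_Flin: "convex_on (edom p) Flin"
proof -
  have "convex_on (edom p) (\<lambda>x. ((transpose A *v grad (A *v xmin) - c) \<bullet> x + 0) + lam * real_of_ereal (p x))"
    using convex_on_real_of_ereal_edom[OF p_proper p_convex] lam_pos
    by (intro convex_on_add convex_on_affine convex_on_cmul) (auto dest: convex_on_imp_convex)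
  moreover have "Flin = (\<lambda>x. ((transpose A *v grad (A *v xmin) - c) \<bullet> x + 0) + lam * real_of_ereal (p x))"
    by (auto simp: Flin_def fun_eq_iff inner_diff_left dot_lmul_matrix)
  ultimately show ?thesis by simp
qed

lemma minimizer_iff_gap_zero:
  assumes "x \<in> edom p"
  shows "x \<in> \<Omega> \<longleftrightarrow> Flin x - Flin xmin + (norm (A *v x - A *v xmin))\<^sup>2 = 0"
proof -
  have "0 \<le> Flin x - Flin xmin" using Flin_min_le[OF assms] by simp
  then have gap_zero: "Flin x - Flin xmin + (norm (A *v x - A *v xmin))\<^sup>2 = 0
      \<longleftrightarrow> Flin x - Flin xmin = 0 \<and> (norm (A *v x - A *v xmin))\<^sup>2 = 0"
    by (intro add_nonneg_eq_0_iff) simp_all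
  show ?thesis
  proof
    assume "x \<in> \<Omega>"
    obtain \<mu> where "\<mu> > 0"
      and "\<mu> / 2 * (norm (A *v x - A *v xmin))\<^sup>2 + (Flin x - Flin xmin) \<le> F x - F xmin"
      using strong_growth[of "{x}"] by auto
    moreover have "F x - F xmin = 0" using F_minimizer[OF \<open>x \<in> \<Omega>\<close>] by simp
    moreover have "0 \<le> \<mu> / 2 * (norm (A *v x - A *v xmin))\<^sup>2" using \<open>\<mu> > 0\<close> by simp
    ultimately have "Flin x - Flin xmin = 0" "\<mu> / 2 * (norm (A *v x - A *v xmin))\<^sup>2 = 0"
      using \<open>0 \<le> Flin x - Flin xmin\<close> by linarith+
    then show "Flin x - Flin xmin + (norm (A *v x - A *v xmin))\<^sup>2 = 0" using \<open>\<mu> > 0\<close> by simp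
  next
    assume "Flin x - Flin xmin + (norm (A *v x - A *v xmin))\<^sup>2 = 0"
    then have "Flin x = Flin xmin" "A *v x = A *v xmin" using gap_zero by simp_all
    then have "F x \<le> F xmin" using F_diff_decomposition[of x] by simp
    then show "x \<in> \<Omega>" using minimizer_iff_F_le[OF assms] by blast
  qed
qed

lemma quadratic_gap_on_piece:
  assumes "polyhedron P" "P \<subseteq> edom p"
    and quadratic: "\<And>x. x \<in> P \<Longrightarrow> p x = ereal (x \<bullet> (Q *v x) + a \<bullet> x + \<alpha>0)"
  obtains G where "quadratic_fun G" "convex_on P G"
    "\<And>x. x \<in> P \<Longrightarrow> G x = Flin x - Flin xmin + (norm (A *v x - A *v xmin))\<^sup>2"
proof
  define G where "G x = ((transpose A *v grad (A *v xmin) - c + lam *\<^sub>R a) \<bullet> x + (lam * \<alpha>0 - Flin xmin))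
    + lam * (x \<bullet> (Q *v x)) + (norm (A *v x - A *v xmin))\<^sup>2" for x
  show G_eq: "G x = Flin x - Flin xmin + (norm (A *v x - A *v xmin))\<^sup>2" if "x \<in> P" for x
    using quadratic[OF that] by (simp add: G_def Flin_def dot_lmul_matrix algebra_simps)
  show "quadratic_fun G"
    unfolding G_def
    by (intro quadratic_fun_add quadratic_fun_affine quadratic_fun_cmult quadratic_fun_quadratic_form
        quadratic_fun_norm_affine_sq)
  have "convex P" using \<open>polyhedron P\<close> by (rule polyhedron_imp_convex)
  have "convex_on P (\<lambda>x. (Flin x + (norm (A *v x - A *v xmin))\<^sup>2) + - Flin xmin)"
    using convex_on_subset[OF convex_on_Flin \<open>P \<subseteq> edom p\<close> \<open>convex P\<close>] \<open>convex P\<close>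
    by (intro convex_on_add convex_on_norm_affine_sq) (auto simp: convex_on_const)
  then show "convex_on P G"
    by (rule convex_on_congI) (simp add: G_eq)
qed

lemma growth_on_piece_meeting:
  assumes "bounded B" "\<And>x. x \<in> B \<Longrightarrow> infdist x \<Omega> \<le> R" "polyhedron P" "P \<subseteq> edom p"
    and quadratic: "\<And>x. x \<in> P \<Longrightarrow> p x = ereal (x \<bullet> (Q *v x) + a \<bullet> x + \<alpha>0)" and "z \<in> P" "z \<in> \<Omega>"
  shows "\<exists>\<alpha>>0. \<forall>x\<in>P \<inter> B. \<alpha> * (infdist x \<Omega>)\<^sup>2 \<le> F x - F xmin"
proof -
  obtain \<mu> where "\<mu> > 0" and growth: "\<And>x. x \<in> B \<Longrightarrow>
      \<mu> / 2 * (norm (A *v x - A *v xmin))\<^sup>2 + (Flin x - Flin xmin) \<le> F x - F xmin"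
    using strong_growth[OF \<open>bounded B\<close>] by blast
  obtain G where "quadratic_fun G" "convex_on P G"
    and G_eq: "\<And>x. x \<in> P \<Longrightarrow> G x = Flin x - Flin xmin + (norm (A *v x - A *v xmin))\<^sup>2"
    using quadratic_gap_on_piece[OF \<open>polyhedron P\<close> \<open>P \<subseteq> edom p\<close> quadratic] by blast
  have Flin_P: "Flin xmin \<le> Flin x" if "x \<in> P" for x
    using Flin_min_le \<open>P \<subseteq> edom p\<close> that by blast
  have G_nonneg: "0 \<le> G x" if "x \<in> P" for x
    using Flin_P[OF that] G_eq[OF that] by simp
  have zeros: "{x\<in>P. G x = 0} = P \<inter> \<Omega>"
    using minimizer_iff_gap_zero G_eq \<open>P \<subseteq> edom p\<close> by auto
  then have "G z = 0" using \<open>z \<in> P\<close> \<open>z \<in> \<Omega>\<close> by blast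
  then obtain C where "C \<ge> 0" and C: "\<And>x. x \<in> P \<Longrightarrow> infdist x (P \<inter> \<Omega>) \<le> C * (sqrt (G x) + G x)"
    using convex_quadratic_error_bound[OF \<open>quadratic_fun G\<close> \<open>polyhedron P\<close> \<open>convex_on P G\<close> G_nonneg \<open>z \<in> P\<close>]
    unfolding zeros by blast
  define \<beta> where "\<beta> = min (\<mu> / 2) 1"
  define K where "K = 4 * C\<^sup>2 + R\<^sup>2 + 1"
  have "\<beta> > 0" using \<open>\<mu> > 0\<close> by (simp add: \<beta>_def)
  have "K > 0" unfolding K_def using zero_le_power2[of C] zero_le_power2[of R] by linarith
  show ?thesis
  proof (intro exI[of _ "\<beta> / K"] conjI ballI)
    show "\<beta> / K > 0" using \<open>\<beta> > 0\<close> \<open>K > 0\<close> by simp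
    fix x assume "x \<in> P \<inter> B"
    then have "x \<in> P" "x \<in> B" by auto
    have "infdist x \<Omega> \<le> infdist x (P \<inter> \<Omega>)"
      using \<open>z \<in> P\<close> \<open>z \<in> \<Omega>\<close> by (intro infdist_mono) auto
    then have "(infdist x \<Omega>)\<^sup>2 \<le> K * G x"
      unfolding K_def
      using C[OF \<open>x \<in> P\<close>] assms(2)[OF \<open>x \<in> B\<close>] G_nonneg[OF \<open>x \<in> P\<close>] \<open>C \<ge> 0\<close> infdist_nonneg
      by (intro power2_le_if_le_sqrt_plus) auto
    then have "\<beta> / K * (infdist x \<Omega>)\<^sup>2 \<le> \<beta> * G x"
      using \<open>\<beta> > 0\<close> \<open>K > 0\<close> by (simp add: field_simps)
    also have "\<dots> = \<beta> * (norm (A *v x - A *v xmin))\<^sup>2 + \<beta> * (Flin x - Flin xmin)"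
      by (simp add: G_eq[OF \<open>x \<in> P\<close>] algebra_simps)
    also have "\<dots> \<le> \<mu> / 2 * (norm (A *v x - A *v xmin))\<^sup>2 + (Flin x - Flin xmin)"
      using Flin_P[OF \<open>x \<in> P\<close>] \<open>\<beta> > 0\<close>
      by (intro add_mono mult_right_mono mult_left_le_one_le) (auto simp: \<beta>_def)
    also have "\<dots> \<le> F x - F xmin" using growth \<open>x \<in> B\<close> by blast
    finally show "\<beta> / K * (infdist x \<Omega>)\<^sup>2 \<le> F x - F xmin" .
  qed
qed

lemma compact_infdist_le: "compact {x. infdist x \<Omega> \<le> R}"
proof -
  obtain b where b: "\<And>y. y \<in> \<Omega> \<Longrightarrow> norm y \<le> b"
    using compact_imp_bounded[OF \<Omega>_compact] unfolding bounded_iff by blast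
  have "norm x \<le> b + R" if "infdist x \<Omega> \<le> R" for x
  proof -
    obtain y where "y \<in> \<Omega>" "infdist x \<Omega> = dist x y"
      using infdist_attains_inf[OF compact_imp_closed[OF \<Omega>_compact] \<Omega>_nonempty] by blast
    then show ?thesis
      using b[of y] that norm_triangle_sub[of x y] by (simp add: dist_norm)
  qed
  then have "bounded {x. infdist x \<Omega> \<le> R}" unfolding bounded_iff by blast
  moreover have "closed {x. infdist x \<Omega> \<le> R}"
    by (intro closed_Collect_le continuous_on_infdist continuous_on_id continuous_on_const)
  ultimately show ?thesis by (simp add: compact_eq_bounded_closed)
qed

lemma growth_on_piece:
  assumes "polyhedron P" "P \<subseteq> edom p"
    and quadratic: "\<And>x. x \<in> P \<Longrightarrow> p x = ereal (x \<bullet> (Q *v x) + a \<bullet> x + \<alpha>0)"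
  shows "\<exists>\<alpha>>0. \<forall>x\<in>P \<inter> {x. infdist x \<Omega> \<le> R}. \<alpha> * (infdist x \<Omega>)\<^sup>2 \<le> F x - F xmin"
proof (cases "P \<inter> \<Omega> = {}")
  case True
  then show ?thesis
    using growth_on_piece_disjoint[OF compact_infdist_le _ polyhedron_imp_closed[OF \<open>polyhedron P\<close>]
        \<open>P \<subseteq> edom p\<close> quadratic]
    by simp
next
  case False
  then obtain z where "z \<in> P" "z \<in> \<Omega>" by blast
  then show ?thesis
    using growth_on_piece_meeting[OF compact_imp_bounded[OF compact_infdist_le] _ \<open>polyhedron P\<close>
        \<open>P \<subseteq> edom p\<close> quadratic]
    by simp
qed

lemma quadratic_growth:
  "\<exists>\<alpha>>0. \<forall>x\<in>edom p. infdist x \<Omega> \<le> R \<longrightarrow> \<alpha> * (infdist x \<Omega>)\<^sup>2 \<le> F x - F xmin"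
proof -
  obtain S where "finite S" and edom_eq: "edom p = \<Union>S" and pieces: "\<forall>P\<in>S. polyhedron P \<and>
      (\<exists>(Q::real^'n^'n) a \<alpha>0. \<forall>x\<in>P. p x = ereal (x \<bullet> (Q *v x) + a \<bullet> x + \<alpha>0))"
    using p_piecewise_lq unfolding piecewise_lq_def by blast
  have piece: "\<exists>\<alpha>>0. \<forall>x\<in>P \<inter> {x. infdist x \<Omega> \<le> R}. \<alpha> * (infdist x \<Omega>)\<^sup>2 \<le> F x - F xmin"
    if "P \<in> S" for P
  proof -
    obtain Q :: "real^'n^'n" and a \<alpha>0 where "\<And>x. x \<in> P \<Longrightarrow> p x = ereal (x \<bullet> (Q *v x) + a \<bullet> x + \<alpha>0)"
      using pieces \<open>P \<in> S\<close> by blast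
    moreover have "polyhedron P" "P \<subseteq> edom p" using pieces edom_eq \<open>P \<in> S\<close> by auto
    ultimately show ?thesis using growth_on_piece by blast
  qed
  obtain \<alpha> where "\<alpha> > 0"
    and "\<forall>P\<in>S. \<forall>x\<in>P \<inter> {x. infdist x \<Omega> \<le> R}. \<alpha> * (infdist x \<Omega>)\<^sup>2 \<le> F x - F xmin"
    using finite_uniform_pos_factor[where T = "\<lambda>P. P \<inter> {x. infdist x \<Omega> \<le> R}"
        and u = "\<lambda>x. (infdist x \<Omega>)\<^sup>2" and v = "\<lambda>x. F x - F xmin", OF \<open>finite S\<close> piece]
    by auto
  then show ?thesis using edom_eq by blast
qed

lemma error_bound:
  "\<exists>\<kappa>>0. \<forall>x. infdist x \<Omega> \<le> R \<longrightarrow> ereal (infdist x \<Omega>) \<le> ereal \<kappa> * edist_set 0 (subdiff f x)"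
proof -
  obtain \<alpha> where "\<alpha> > 0"
    and growth: "\<And>x. x \<in> edom p \<Longrightarrow> infdist x \<Omega> \<le> R \<Longrightarrow> \<alpha> * (infdist x \<Omega>)\<^sup>2 \<le> F x - F xmin"
    using quadratic_growth by blast
  have "ereal (infdist x \<Omega>) \<le> ereal (1 / \<alpha>) * edist_set 0 (subdiff f x)" if "infdist x \<Omega> \<le> R" for x
  proof (rule infdist_le_subdiff_if_quadratic_growth[OF compact_imp_closed[OF \<Omega>_compact] \<Omega>_nonempty \<open>\<alpha> > 0\<close>])
    fix y assume "y \<in> \<Omega>"
    then have "f y = ereal (F xmin)" using minimizers_subset_edom f_eq_F F_minimizer by auto
    then show "\<bar>f y\<bar> \<noteq> \<infinity>" by simp
    show "f y + ereal (\<alpha> * (infdist x \<Omega>)\<^sup>2) \<le> f x"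
    proof (cases "x \<in> edom p")
      case True
      then show ?thesis using \<open>f y = ereal (F xmin)\<close> growth[OF True that] by (simp add: f_eq_F)
    qed (simp add: f_eq_infinity \<open>f y = ereal (F xmin)\<close>)
  qed
  then show ?thesis using \<open>\<alpha> > 0\<close> by (intro exI[of _ "1 / \<alpha>"]) auto
qed

end

theorem proposition2p3:
  fixes A :: "real^'n^'m" and c :: "real^'n" and lam :: real
    and h :: "real^'m \<Rightarrow> real" and p :: "real^'n \<Rightarrow> ereal"
  shows
   "((lam > 0 \<and> convex_on UNIV h \<and> twice_cont_diff h \<and>
      closed_fun p \<and> proper_fun p \<and> convex_fun p \<and> piecewise_lq p \<and>
      (let f = (\<lambda>x. ereal (h (A *v x) - c \<bullet> x) + ereal lam * p x);
           \<Omega> = {x. \<forall>z. f x \<le> f z}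
       in \<Omega> \<noteq> {} \<and> compact \<Omega>) \<and>
      strongly_convex_on_compacts h)
     \<longrightarrow>
      (let f = (\<lambda>x. ereal (h (A *v x) - c \<bullet> x) + ereal lam * p x);
           \<Omega> = {x. \<forall>z. f x \<le> f z}
       in \<forall>(\<tau>::real) (x0::real^'n) (\<epsilon>::nat \<Rightarrow> real).
            \<tau> > 0 \<and> (\<forall>k. 0 \<le> \<epsilon> k) \<and> summable \<epsilon> \<longrightarrow>
            (let M = mat 1 + \<tau> *\<^sub>R (transpose A ** A)
             in \<exists>\<kappa>>0. \<forall>x. infdist x \<Omega> \<le> suminf \<epsilon> + dist_M M x0 \<Omega> \<longrightarrow>
                   ereal (infdist x \<Omega>) \<le> ereal \<kappa> * edist_set 0 (subdiff f x))))
    \<and> (\<forall>b::real^'m. strongly_convex_on_compacts (\<lambda>y::real^'m. \<Sum>i\<in>UNIV. (y $ i - b $ i)\<^sup>2 / 2))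
    \<and> (\<forall>b::real^'m. (\<forall>i. b $ i = -1 \<or> b $ i = 1) \<longrightarrow>
         strongly_convex_on_compacts (\<lambda>y::real^'m. \<Sum>i\<in>UNIV. ln (1 + exp (- (b $ i * y $ i)))))"
proof (intro conjI impI allI strongly_convex_on_compacts_sum_squares strongly_convex_on_compacts_logistic)
  define f where "f = (\<lambda>x. ereal (h (A *v x) - c \<bullet> x) + ereal lam * p x)"
  define \<Omega> where "\<Omega> = {x. \<forall>z. f x \<le> f z}"
  assume hyps: "lam > 0 \<and> convex_on UNIV h \<and> twice_cont_diff h \<and>
      closed_fun p \<and> proper_fun p \<and> convex_fun p \<and> piecewise_lq p \<and>
      (let f = (\<lambda>x. ereal (h (A *v x) - c \<bullet> x) + ereal lam * p x); \<Omega> = {x. \<forall>z. f x \<le> f z}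
       in \<Omega> \<noteq> {} \<and> compact \<Omega>) \<and> strongly_convex_on_compacts h"
  obtain grad where "\<And>y. (h has_derivative (\<lambda>v. grad y \<bullet> v)) (at y)"
    using hyps unfolding twice_cont_diff_def by blast
  then interpret composite_problem A c lam h grad p f \<Omega>
    using hyps by unfold_locales (simp_all add: f_def \<Omega>_def Let_def)
  show "let f = (\<lambda>x. ereal (h (A *v x) - c \<bullet> x) + ereal lam * p x); \<Omega> = {x. \<forall>z. f x \<le> f z}
    in \<forall>\<tau> x0 \<epsilon>. \<tau> > 0 \<and> (\<forall>k. 0 \<le> \<epsilon> k) \<and> summable \<epsilon> \<longrightarrow>
      (let M = mat 1 + \<tau> *\<^sub>R (transpose A ** A)
       in \<exists>\<kappa>>0. \<forall>x. infdist x \<Omega> \<le> suminf \<epsilon> + dist_M M x0 \<Omega> \<longrightarrow>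
             ereal (infdist x \<Omega>) \<le> ereal \<kappa> * edist_set 0 (subdiff f x))"
    unfolding Let_def f_def[symmetric] \<Omega>_def[symmetric] using error_bound by blast
qed simp

end
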